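(* Let $b:\Omega\times\mathbb R\to\mathbb R$ be a Carathéodory function, $C^1$ in $\eta$ for a.e. $x$ and measurable in $x$ for each $\eta$, with a constant $B_\eta\ge0$ such that $0\le\frac{\partial b}{\partial\eta}(x,\eta)\le B_\eta$ for a.e. $x\in\Omega$ and all $\eta\in\mathbb R$. Consider either (1D) $\Omega=(\alpha,\beta)$ with subdivision $\alpha=a_0<a_1<\dots<a_n=\beta$, $h_k=a_k-a_{k-1}$, and $\mathcal V$ the continuous piecewise linear functions on this subdivision vanishing at $\alpha$ and $\beta$; or (2D) $\Omega\subset\mathbb R^2$ polygonal with a conforming triangulation $\mathcal T$ such that there are $0<t_{min}\le t_{max}<\pi/2$ with every interior angle of every triangle in $[t_{min},t_{max}]$, and $\mathcal V$ the continuous piecewise linear functions on $\mathcal T$ vanishing on $\partial\Omega$. Let $\mathcal V^+=\{v\in\mathcal V:v\ge0\}$, let $u_1\in\mathcal V$ satisfy $\int_\Omega\nabla u_1\cdot\nabla v+b(x,u_1)v\,dx\le0$ for all $v\in\mathcal V^+$ and $u_2\in\mathcal V$ satisfy $\int_\Omega\nabla u_2\cdot\nabla v+b(x,u_2)v\,dx\ge0$ for all $v\in\mathcal V^+$. Suppose that, in the 1D case, $h_k^2<\frac{2}{B_\eta}$ for $k=1,\dots,n$, and in the 2D case, $|T|<\frac{3}{7B_\eta}\min_{k=1,2,3}\cot\theta_{T,k}$ for each $T\in\mathcal T$, where $|T|$ is the area of $T$ and $\theta_{T,1},\theta_{T,2},\theta_{T,3}$ are its interior angles. Then $u_1\le u_2$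 in $\Omega$.
   Context: This concerns the $P_1$ finite element discretization of the semilinear problem $-\Delta u+b(x,u)=0$ in $\Omega$, $u=0$ on $\partial\Omega$, whose discrete form is: find $u\in\mathcal V$ with $\int_\Omega\nabla u\cdot\nabla v+b(x,u)v\,dx=0$ for all $v\in\mathcal V$; $u_1$ and $u_2$ are respectively a discrete sub- and supersolution of it. *)

theory Defs
  imports "HOL-Analysis.Analysis"
begin

definition vangle :: "'a::real_inner \<Rightarrow> 'a \<Rightarrow> real" where
  "vangle u v = arccos ((u \<bullet> v) / (norm u * norm v))"

definition grad :: "(real^2 \<Rightarrow> real) \<Rightarrow> real^2 \<Rightarrow> real^2" where
  "grad f x = (\<chi> i. frechet_derivative f (at x) (axis i 1))"

definition caratheodory_bounded ::
  "'a::euclidean_space set \<Rightarrow> ('a \<Rightarrow> real \<Rightarrow> real) \<Rightarrow> real \<Rightarrow> bool" where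
  "caratheodory_bounded \<Omega> b B \<longleftrightarrow> B \<ge> 0 \<and>
     (\<forall>\<eta>. (\<lambda>x. b x \<eta>) \<in> borel_measurable (lebesgue_on \<Omega>)) \<and>
     (AE x in lebesgue. x \<in> \<Omega> \<longrightarrow>
        (b x) C1_differentiable_on UNIV \<and>
        (\<forall>\<eta>. 0 \<le> deriv (b x) \<eta> \<and> deriv (b x) \<eta> \<le> B))"

definition discrete_subsol ::
  "'a::euclidean_space set \<Rightarrow> ('a \<Rightarrow> real) set \<Rightarrow> (('a \<Rightarrow> real) \<Rightarrow> ('a \<Rightarrow> real) \<Rightarrow> 'a \<Rightarrow> real)
    \<Rightarrow> ('a \<Rightarrow> real \<Rightarrow> real) \<Rightarrow> ('a \<Rightarrow> real) \<Rightarrow> bool" where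
  "discrete_subsol \<Omega> V gp b u \<longleftrightarrow> u \<in> V \<and>
     (\<forall>v\<in>V. (\<forall>x\<in>\<Omega>. v x \<ge> 0) \<longrightarrow>
        set_integrable lebesgue \<Omega> (\<lambda>x. gp u v x + b x (u x) * v x) \<and>
        (LINT x:\<Omega>|lebesgue. gp u v x + b x (u x) * v x) \<le> 0)"

definition discrete_supersol ::
  "'a::euclidean_space set \<Rightarrow> ('a \<Rightarrow> real) set \<Rightarrow> (('a \<Rightarrow> real) \<Rightarrow> ('a \<Rightarrow> real) \<Rightarrow> 'a \<Rightarrow> real)
    \<Rightarrow> ('a \<Rightarrow> real \<Rightarrow> real) \<Rightarrow> ('a \<Rightarrow> real) \<Rightarrow> bool" where
  "discrete_supersol \<Omega> V gp b u \<longleftrightarrow> u \<in> V \<and>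
     (\<forall>v\<in>V. (\<forall>x\<in>\<Omega>. v x \<ge> 0) \<longrightarrow>
        set_integrable lebesgue \<Omega> (\<lambda>x. gp u v x + b x (u x) * v x) \<and>
        (LINT x:\<Omega>|lebesgue. gp u v x + b x (u x) * v x) \<ge> 0)"

definition mesh1D :: "real \<Rightarrow> real \<Rightarrow> nat \<Rightarrow> (nat \<Rightarrow> real) \<Rightarrow> bool" where
  "mesh1D \<alpha> \<beta> n a \<longleftrightarrow> n \<ge> 1 \<and> a 0 = \<alpha> \<and> a n = \<beta> \<and> (\<forall>k\<in>{1..n}. a (k - 1) < a k)"

(* continuous piecewise linear functions on the subdivision vanishing at the endpoints
   (continuity on [alpha,beta] follows from affinity on each closed subinterval) *)
definition P1_1D :: "nat \<Rightarrow> (nat \<Rightarrow> real) \<Rightarrow> (real \<Rightarrow> real) set" where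
  "P1_1D n a = {v. v (a 0) = 0 \<and> v (a n) = 0 \<and>
     (\<forall>k\<in>{1..n}. \<exists>c d. \<forall>x\<in>{a (k - 1)..a k}. v x = c * x + d)}"

(* conforming triangulation of a polygonal domain Omega: triangles are given by their
   vertex sets; two distinct triangles meet in the convex hull of their common vertices
   (empty, a common vertex, or a common edge) *)
definition conforming_triangulation :: "(real^2) set \<Rightarrow> (real^2) set set \<Rightarrow> bool" where
  "conforming_triangulation \<Omega> \<T> \<longleftrightarrow> finite \<T> \<and> \<T> \<noteq> {} \<and>
     (\<forall>T\<in>\<T>. card T = 3 \<and> \<not> collinear T) \<and>
     \<Omega> = interior (\<Union>T\<in>\<T>. convex hull T) \<and>
     (\<forall>T1\<in>\<T>. \<forall>T2\<in>\<T>. T1 \<noteq> T2 \<longrightarrow>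
        convex hull T1 \<inter> convex hull T2 = convex hull (T1 \<inter> T2))"

definition tri_angles :: "(real^2) set \<Rightarrow> real set" where
  "tri_angles T = {vangle (q - p) (r - p) | p q r.
      p \<in> T \<and> q \<in> T \<and> r \<in> T \<and> p \<noteq> q \<and> p \<noteq> r \<and> q \<noteq> r}"

definition P1_2D :: "(real^2) set \<Rightarrow> (real^2) set set \<Rightarrow> (real^2 \<Rightarrow> real) set" where
  "P1_2D \<Omega> \<T> = {v. (\<forall>x\<in>frontier \<Omega>. v x = 0) \<and>
     (\<forall>T\<in>\<T>. \<exists>c d. \<forall>x\<in>convex hull T. v x = c \<bullet> x + d)}"

end

theory Submission
  imports Defs
begin

text \<open>Suppose \<open>w = u\<^sub>1 - u\<^sub>2\<close> is positive somewhere. Being piecewise linear, it attains its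
  positive maximum \<open>M\<close> at a node; let \<open>p\<close> be the rightmost such node and \<open>\<phi>\<close> its hat function.
  Testing both inequalities with \<open>\<phi>\<close> and subtracting gives
  \<open>\<integral> \<nabla>w \<cdot> \<nabla>\<phi> + (b(u\<^sub>1) - b(u\<^sub>2)) \<phi> \<le> 0\<close>. On an element around \<open>p\<close> the first term is a combination of
  the drops \<open>M - w(v)\<close> at the other vertices, with weights \<open>1 / h\<^sup>2\<close> in 1D and
  \<open>cot \<theta> / (2 |T|)\<close> in 2D (cotangent formula), while \<open>0 \<le> \<partial>b/\<partial>\<eta> \<le> B\<close> and \<open>w \<ge> M - (1 - \<phi>) \<Sigma> drops\<close>
  give \<open>(b(u\<^sub>1) - b(u\<^sub>2)) \<phi> \<ge> -B \<phi> (1 - \<phi>) \<Sigma> drops \<ge> -(B / 4) \<Sigma> drops\<close>. The mesh condition makes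
  every element contribution nonnegative, and the element containing a vertex to the right of
  \<open>p\<close>, where \<open>w < M\<close> by the choice of \<open>p\<close>, contributes a positive amount: a contradiction.\<close>

lemma C1_deriv_bounded_diff_ge:
  fixes f :: "real \<Rightarrow> real"
  assumes C1: "f C1_differentiable_on UNIV" and d: "\<forall>\<eta>. 0 \<le> deriv f \<eta> \<and> deriv f \<eta> \<le> B"
  shows "f s - f t \<ge> B * min (s - t) 0"
proof -
  have D: "\<And>x. DERIV f x :> deriv f x"
    using C1 by (simp add: C1_differentiable_on_eq DERIV_deriv_iff_real_differentiable)
  consider "s = t" | "t < s" | "s < t" by linarith
  then show ?thesis
  proof cases
    case 2
    then obtain z where "f s - f t = (s - t) * deriv f z" using MVT2[of t s f "deriv f"] D by blast
    then show ?thesis using 2 d by (simp add: min_def)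
  next
    case 3
    then obtain z where z: "f t - f s = (t - s) * deriv f z" using MVT2[of s t f "deriv f"] D by blast
    have "(t - s) * deriv f z \<le> (t - s) * B" using 3 d by (intro mult_left_mono) auto
    then show ?thesis using 3 z by (simp add: min_def algebra_simps)
  qed simp
qed

text \<open>The loss is at most \<open>B D l (1 - l)\<close>, and \<open>l (1 - l) \<le> 1 / 4\<close>.\<close>

lemma C1_deriv_bounded_weighted_diff_ge:
  fixes f :: "real \<Rightarrow> real"
  assumes C1: "f C1_differentiable_on UNIV" and d: "\<forall>\<eta>. 0 \<le> deriv f \<eta> \<and> deriv f \<eta> \<le> B"
    and l: "0 \<le> l" "l \<le> 1" and D: "0 \<le> D" and st: "s - t \<ge> - ((1 - l) * D)"
  shows "(f s - f t) * l \<ge> - B * D / 4"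
proof -
  have B: "B \<ge> 0" using d by (meson order_trans)
  have "(1 - l) * D \<ge> 0" using l D by simp
  then have "min (s - t) 0 \<ge> - ((1 - l) * D)" using st by (simp add: min_def)
  then have "B * min (s - t) 0 * l \<ge> B * (- ((1 - l) * D)) * l"
    using B l by (intro mult_right_mono mult_left_mono) auto
  moreover have "(f s - f t) * l \<ge> B * min (s - t) 0 * l"
    using C1_deriv_bounded_diff_ge[OF C1 d] l by (intro mult_right_mono) auto
  moreover have "l * (1 - l) \<le> 1 / 4"
    using zero_le_power2[of "l - 1 / 2"] by (simp add: power2_eq_square algebra_simps)
  then have "(B * D) * (l * (1 - l)) \<le> (B * D) * (1 / 4)"
    using B D by (intro mult_left_mono) auto
  ultimately show ?thesis by (simp add: algebra_simps)
qed

lemma integral_le_0_of_subsol_supersol: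
  fixes \<Omega> :: "'a::euclidean_space set"
  assumes sub: "discrete_subsol \<Omega> V gp b u1" and sup: "discrete_supersol \<Omega> V gp b u2"
    and \<phi>: "\<phi> \<in> V" "\<forall>x\<in>\<Omega>. 0 \<le> \<phi> x" and g: "integrable lebesgue g"
    and inside: "AE x in lebesgue. x \<in> \<Omega> \<longrightarrow>
       g x \<le> (gp u1 \<phi> x + b x (u1 x) * \<phi> x) - (gp u2 \<phi> x + b x (u2 x) * \<phi> x)"
    and outside: "AE x in lebesgue. x \<notin> \<Omega> \<longrightarrow> g x \<le> 0"
  shows "integral\<^sup>L lebesgue g \<le> 0"
proof -
  define f1 where "f1 x = gp u1 \<phi> x + b x (u1 x) * \<phi> x" for x
  define f2 where "f2 x = gp u2 \<phi> x + b x (u2 x) * \<phi> x" for x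
  have F1: "integrable lebesgue (\<lambda>x. indicator \<Omega> x *\<^sub>R f1 x)" and l1: "(LINT x:\<Omega>|lebesgue. f1 x) \<le> 0"
    using sub \<phi> unfolding discrete_subsol_def f1_def set_integrable_def by auto
  have F2: "integrable lebesgue (\<lambda>x. indicator \<Omega> x *\<^sub>R f2 x)" and l2: "(LINT x:\<Omega>|lebesgue. f2 x) \<ge> 0"
    using sup \<phi> unfolding discrete_supersol_def f2_def set_integrable_def by auto
  have "AE x in lebesgue. g x \<le> indicator \<Omega> x *\<^sub>R f1 x - indicator \<Omega> x *\<^sub>R f2 x"
    using inside outside by eventually_elim (auto simp: f1_def f2_def indicator_def)
  then have "integral\<^sup>L lebesgue g \<le> integral\<^sup>L lebesgue (\<lambda>x. indicator \<Omega> x *\<^sub>R f1 x - indicator \<Omega> x *\<^sub>R f2 x)"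
    by (rule integral_mono_AE[OF g Bochner_Integration.integrable_diff[OF F1 F2]])
  also have "\<dots> = (LINT x:\<Omega>|lebesgue. f1 x) - (LINT x:\<Omega>|lebesgue. f2 x)"
    unfolding set_lebesgue_integral_def by (rule Bochner_Integration.integral_diff[OF F1 F2])
  finally show ?thesis using l1 l2 by linarith
qed

lemma integral_sum_indicator:
  fixes A :: "'i \<Rightarrow> 'a::euclidean_space set"
  assumes "finite I" "\<forall>i\<in>I. A i \<in> lmeasurable"
  shows "integrable lebesgue (\<lambda>x. \<Sum>i\<in>I. indicator (A i) x * K i)"
    and "integral\<^sup>L lebesgue (\<lambda>x. \<Sum>i\<in>I. indicator (A i) x * K i) = (\<Sum>i\<in>I. K i * measure lebesgue (A i))"
proof -
  have ind: "integrable lebesgue (\<lambda>x. indicator (A i) x * K i)" if "i \<in> I" for i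
    using assms(2) that unfolding lmeasurable_iff_integrable by simp
  then show "integrable lebesgue (\<lambda>x. \<Sum>i\<in>I. indicator (A i) x * K i)" by simp
  have "integral\<^sup>L lebesgue (\<lambda>x. \<Sum>i\<in>I. indicator (A i) x * K i)
      = (\<Sum>i\<in>I. integral\<^sup>L lebesgue (\<lambda>x. indicator (A i) x * K i))"
    by (rule Bochner_Integration.integral_sum) (rule ind)
  also have "\<dots> = (\<Sum>i\<in>I. K i * measure lebesgue (A i))"
    by (rule sum.cong) (simp_all add: mult.commute)
  finally show "integral\<^sup>L lebesgue (\<lambda>x. \<Sum>i\<in>I. indicator (A i) x * K i) = (\<Sum>i\<in>I. K i * measure lebesgue (A i))" .
qed

lemma subsol_supersol_gain_le_0:
  fixes \<Omega> :: "'a::euclidean_space set"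
  assumes sub: "discrete_subsol \<Omega> V gp b u1" and sup: "discrete_supersol \<Omega> V gp b u2"
    and \<phi>: "\<phi> \<in> V" "\<forall>x\<in>\<Omega>. 0 \<le> \<phi> x" and A: "finite I" "\<forall>i\<in>I. A i \<in> lmeasurable"
    and inside: "AE x in lebesgue. x \<in> \<Omega> \<longrightarrow> (\<Sum>i\<in>I. indicator (A i) x * K i)
       \<le> (gp u1 \<phi> x + b x (u1 x) * \<phi> x) - (gp u2 \<phi> x + b x (u2 x) * \<phi> x)"
    and outside: "AE x in lebesgue. x \<notin> \<Omega> \<longrightarrow> (\<Sum>i\<in>I. indicator (A i) x * K i) \<le> 0"
  shows "(\<Sum>i\<in>I. K i * measure lebesgue (A i)) \<le> 0"
  using integral_le_0_of_subsol_supersol[OF sub sup \<phi> integral_sum_indicator(1)[OF A] inside outside]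
  unfolding integral_sum_indicator(2)[OF A] .

lemma finite_exists_max_rightmost:
  fixes w :: "'a \<Rightarrow> real" and key :: "'a \<Rightarrow> real"
  assumes "finite N" "N \<noteq> {}"
  obtains p where "p \<in> N" "\<forall>v\<in>N. w v \<le> w p" "\<forall>v\<in>N. w v = w p \<longrightarrow> key v \<le> key p"
proof -
  define P where "P = {v\<in>N. w v = Max (w ` N)}"
  have "Max (w ` N) \<in> w ` N" using assms by simp
  then obtain v where "v \<in> N" "w v = Max (w ` N)" by (metis imageE)
  then have P: "finite P" "P \<noteq> {}" using assms(1) unfolding P_def by auto
  have "Max (key ` P) \<in> key ` P" using P by simp
  then obtain p where p: "p \<in> P" "key p = Max (key ` P)" by (metis imageE)
  have "p \<in> N" "w p = Max (w ` N)" using p(1) unfolding P_def by auto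
  moreover have "\<forall>v\<in>N. w v \<le> Max (w ` N)" using assms(1) by simp
  moreover have "key v \<le> key p" if "v \<in> N" "w v = Max (w ` N)" for v
    using p(2) P(1) that unfolding P_def by simp
  ultimately show ?thesis using that[of p] by simp
qed

lemma deriv_eq_affine_on_open:
  fixes f :: "real \<Rightarrow> real"
  assumes "open S" "x \<in> S" "\<forall>y\<in>S. f y = c * y + d"
  shows "deriv f x = c"
proof -
  have "((\<lambda>y. c * y + d) has_field_derivative c) (at x)"
    by (auto intro!: derivative_eq_intros)
  then have "(f has_field_derivative c) (at x)"
    by (rule has_field_derivative_transform_within_open[OF _ assms(1,2)]) (use assms(3) in auto)
  then show ?thesis by (rule DERIV_imp_deriv)
qed

lemma grad_eq_affine_on_open:
  fixes f :: "real^2 \<Rightarrow> real"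
  assumes "open S" "x \<in> S" "\<forall>y\<in>S. f y = c \<bullet> y + d"
  shows "grad f x = c"
proof -
  have "((\<lambda>y. c \<bullet> y + d) has_derivative (\<lambda>h. c \<bullet> h)) (at x)"
    by (auto intro!: derivative_eq_intros)
  then have "(f has_derivative (\<lambda>h. c \<bullet> h)) (at x)"
    by (rule has_derivative_transform_within_open[OF _ assms(1,2)]) (use assms(3) in auto)
  then have "frechet_derivative f (at x) = (\<lambda>h. c \<bullet> h)"
    by (rule frechet_derivative_at[symmetric])
  then show ?thesis unfolding grad_def by (simp add: inner_axis vec_eq_iff)
qed

lemma mesh1D_less:
  assumes "mesh1D \<alpha> \<beta> n a" "i < j" "j \<le> n"
  shows "a i < a j"
  using assms(2,3)
proof (induction j)
  case (Suc j)
  have "Suc j \<in> {1..n}" using Suc.prems by auto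
  then have "a j < a (Suc j)" using assms(1) unfolding mesh1D_def by fastforce
  then show ?case using Suc by (cases "i = j") auto
qed simp

lemma mesh1D_le:
  assumes "mesh1D \<alpha> \<beta> n a" "i \<le> j" "j \<le> n"
  shows "a i \<le> a j"
  using mesh1D_less[OF assms(1), of i j] assms by (cases "i = j") auto

lemma mesh1D_cell_exists:
  assumes "mesh1D \<alpha> \<beta> n a" "x \<in> {\<alpha><..<\<beta>}"
  obtains k where "k \<in> {1..n}" "a (k - 1) < x" "x \<le> a k"
proof -
  define k where "k = (LEAST k. x \<le> a k)"
  have ex: "x \<le> a n" using assms unfolding mesh1D_def by auto
  then have xk: "x \<le> a k" unfolding k_def by (rule LeastI)
  have kn: "k \<le> n" unfolding k_def using ex by (rule Least_le)
  have k0: "k \<noteq> 0"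
  proof
    assume "k = 0"
    then show False using xk assms unfolding mesh1D_def by auto
  qed
  have "\<not> x \<le> a (k - 1)" unfolding k_def
    by (rule not_less_Least) (use k0 in \<open>simp add: k_def\<close>)
  moreover have "k \<in> {1..n}" using kn k0 by simp
  ultimately show ?thesis using xk that[of k] by simp
qed

lemma P1_1D_affine_on_cell:
  assumes "u \<in> P1_1D n a" "k \<in> {1..n}"
  obtains c d where "\<forall>x\<in>{a (k - 1)..a k}. u x = c * x + d"
proof -
  have "\<exists>c d. \<forall>x\<in>{a (k - 1)..a k}. u x = c * x + d"
    using assms unfolding P1_1D_def by simp
  then show ?thesis using that by blast
qed

lemma P1_1D_diff:
  assumes "u \<in> P1_1D n a" "v \<in> P1_1D n a"
  shows "(\<lambda>x. u x - v x) \<in> P1_1D n a"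
proof -
  have "\<exists>c d. \<forall>x\<in>{a (k - 1)..a k}. u x - v x = c * x + d" if k: "k \<in> {1..n}" for k
  proof -
    obtain c d where "\<forall>x\<in>{a (k - 1)..a k}. u x = c * x + d"
      using P1_1D_affine_on_cell[OF assms(1) k] .
    moreover obtain c' d' where "\<forall>x\<in>{a (k - 1)..a k}. v x = c' * x + d'"
      using P1_1D_affine_on_cell[OF assms(2) k] .
    ultimately show ?thesis by (intro exI[of _ "c - c'"] exI[of _ "d - d'"]) (auto simp: algebra_simps)
  qed
  then show ?thesis using assms unfolding P1_1D_def by simp
qed

lemma P1_1D_cell_value:
  assumes "mesh1D \<alpha> \<beta> n a" "u \<in> P1_1D n a" "k \<in> {1..n}" "x \<in> {a (k - 1)..a k}"
  shows "u x = u (a (k - 1)) + (x - a (k - 1)) / (a k - a (k - 1)) * (u (a k) - u (a (k - 1)))"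
proof -
  obtain c d where cd: "\<forall>y\<in>{a (k - 1)..a k}. u y = c * y + d"
    using P1_1D_affine_on_cell[OF assms(2,3)] .
  have h: "a (k - 1) < a k" using mesh1D_less[OF assms(1), of "k - 1" k] assms(3) by auto
  then show ?thesis using cd assms(4) by (simp add: field_simps)
qed

lemma P1_1D_cell_deriv:
  assumes "mesh1D \<alpha> \<beta> n a" "u \<in> P1_1D n a" "k \<in> {1..n}" "x \<in> {a (k - 1)<..<a k}"
  shows "deriv u x = (u (a k) - u (a (k - 1))) / (a k - a (k - 1))"
proof -
  obtain c d where cd: "\<forall>y\<in>{a (k - 1)..a k}. u y = c * y + d"
    using P1_1D_affine_on_cell[OF assms(2,3)] .
  have h: "a (k - 1) < a k" using mesh1D_less[OF assms(1), of "k - 1" k] assms(3) by auto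
  have "deriv u x = c" by (rule deriv_eq_affine_on_open[of "{a (k - 1)<..<a k}"]) (use cd assms(4) in auto)
  then show ?thesis using cd h by (simp add: field_simps)
qed

definition hat1D :: "(nat \<Rightarrow> real) \<Rightarrow> nat \<Rightarrow> real \<Rightarrow> real" where
  "hat1D a p x =
     (if a (p - 1) \<le> x \<and> x \<le> a p then (x - a (p - 1)) / (a p - a (p - 1))
      else if a p \<le> x \<and> x \<le> a (p + 1) then (a (p + 1) - x) / (a (p + 1) - a p) else 0)"

lemma hat1D_nonneg:
  assumes "mesh1D \<alpha> \<beta> n a" "1 \<le> p" "p < n"
  shows "0 \<le> hat1D a p x"
  using mesh1D_less[OF assms(1), of "p - 1" p] mesh1D_less[OF assms(1), of p "p + 1"] assms(2,3)
  unfolding hat1D_def by auto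

lemma hat1D_on_cell:
  assumes mesh: "mesh1D \<alpha> \<beta> n a" and p: "1 \<le> p" "p < n" and k: "k \<in> {1..n}" "x \<in> {a (k - 1)..a k}"
  shows "hat1D a p x = (if k = p then (x - a (p - 1)) / (a p - a (p - 1))
    else if k = p + 1 then (a (p + 1) - x) / (a (p + 1) - a p) else 0)"
proof -
  have h: "a (p - 1) < a p" "a p < a (p + 1)"
    using mesh1D_less[OF mesh, of "p - 1" p] mesh1D_less[OF mesh, of p "p + 1"] p by auto
  consider "k = p" | "k = p + 1" | "k < p" | "k > p + 1" by linarith
  then show ?thesis
  proof cases
    case 1
    then show ?thesis using k unfolding hat1D_def by auto
  next
    case 2
    then have x: "a p \<le> x" "x \<le> a (p + 1)" using k by auto
    show ?thesis
    proof (cases "x = a p")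
      case True
      then show ?thesis using 2 h unfolding hat1D_def by simp
    next
      case False
      then have "\<not> (a (p - 1) \<le> x \<and> x \<le> a p)" using x by auto
      then show ?thesis using 2 x h unfolding hat1D_def by simp
    qed
  next
    case 3
    then have "a k \<le> a (p - 1)" using mesh1D_le[OF mesh, of k "p - 1"] p by auto
    then have "x \<le> a (p - 1)" using k by auto
    then have "hat1D a p x = (if x = a (p - 1) then (x - a (p - 1)) / (a p - a (p - 1)) else 0)"
      using h unfolding hat1D_def by auto
    then show ?thesis using 3 by simp
  next
    case 4
    then have "a (p + 1) \<le> a (k - 1)" using mesh1D_le[OF mesh, of "p + 1" "k - 1"] k by auto
    then have "a (p + 1) \<le> x" using k by auto
    then have "hat1D a p x = (if x = a (p + 1) then (a (p + 1) - x) / (a (p + 1) - a p) else 0)"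
      using h unfolding hat1D_def by auto
    then show ?thesis using 4 by simp
  qed
qed

lemma hat1D_node:
  assumes mesh: "mesh1D \<alpha> \<beta> n a" and p: "1 \<le> p" "p < n" and k: "k \<le> n"
  shows "hat1D a p (a k) = (if k = p then 1 else 0)"
proof (cases "k = 0")
  case True
  have "a 0 < a 1" using mesh1D_less[OF mesh, of 0 1] p by auto
  moreover have "(1::nat) \<in> {1..n}" using p by simp
  ultimately show ?thesis using hat1D_on_cell[OF mesh p, of 1 "a 0"] p True by simp
next
  case False
  have h: "a (k - 1) < a k" "a (p - 1) < a p"
    using mesh1D_less[OF mesh, of "k - 1" k] mesh1D_less[OF mesh, of "p - 1" p] p k False by auto
  have "k \<in> {1..n}" "a k \<in> {a (k - 1)..a k}" using k False h by auto
  then show ?thesis using hat1D_on_cell[OF mesh p, of k "a k"] h by simp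
qed

lemma hat1D_in_P1_1D:
  assumes mesh: "mesh1D \<alpha> \<beta> n a" and p: "1 \<le> p" "p < n"
  shows "hat1D a p \<in> P1_1D n a"
proof -
  have "\<exists>c d. \<forall>x\<in>{a (k - 1)..a k}. hat1D a p x = c * x + d" if k: "k \<in> {1..n}" for k
  proof -
    consider "k = p" | "k = p + 1" | "k \<noteq> p \<and> k \<noteq> p + 1" by blast
    then show ?thesis
    proof cases
      case 1
      have "hat1D a p x = 1 / (a p - a (p - 1)) * x + - a (p - 1) / (a p - a (p - 1))"
        if "x \<in> {a (k - 1)..a k}" for x
        using hat1D_on_cell[OF mesh p k that] 1 by (simp add: diff_divide_distrib)
      then show ?thesis by blast
    next
      case 2
      have "hat1D a p x = - 1 / (a (p + 1) - a p) * x + a (p + 1) / (a (p + 1) - a p)"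
        if "x \<in> {a (k - 1)..a k}" for x
        using hat1D_on_cell[OF mesh p k that] 2 by (simp add: diff_divide_distrib)
      then show ?thesis by blast
    next
      case 3
      have "hat1D a p x = 0 * x + 0" if "x \<in> {a (k - 1)..a k}" for x
        using hat1D_on_cell[OF mesh p k that] 3 by simp
      then show ?thesis by blast
    qed
  qed
  moreover have "hat1D a p (a 0) = 0" "hat1D a p (a n) = 0"
    using hat1D_node[OF mesh p, of 0] hat1D_node[OF mesh p, of n] p by auto
  ultimately show ?thesis unfolding P1_1D_def by auto
qed

lemma rightmost_positive_max_index:
  fixes W :: "nat \<Rightarrow> real"
  assumes "W 0 = 0" "W n = 0" "k \<le> n" "0 < W k"
  obtains p where "1 \<le> p" "p < n" "\<forall>j\<le>n. W j \<le> W p" "0 < W p" "W (p + 1) < W p"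
proof -
  obtain p where p: "p \<in> {..n}" "\<forall>j\<in>{..n}. W j \<le> W p" "\<forall>j\<in>{..n}. W j = W p \<longrightarrow> real j \<le> real p"
    by (rule finite_exists_max_rightmost[of "{..n}" W real]) auto
  have "W k \<le> W p" using p(2) assms(3) by simp
  then have pos: "0 < W p" using assms(4) by linarith
  then have "p \<noteq> 0" "p \<noteq> n" using assms(1,2) by (metis less_irrefl)+
  then have p1: "p + 1 \<in> {..n}" using p(1) by simp
  have "W (p + 1) \<noteq> W p"
  proof
    assume "W (p + 1) = W p"
    then have "real (p + 1) \<le> real p" using p(3) p1 by blast
    then show False by simp
  qed
  then have "W (p + 1) < W p" using bspec[OF p(2) p1] by simp
  moreover have "1 \<le> p" "p < n" using \<open>p \<noteq> 0\<close> \<open>p \<noteq> n\<close> p(1) by auto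
  ultimately show ?thesis using that p(2) pos by auto
qed

lemma mesh1D_open_cells_disjoint:
  assumes mesh: "mesh1D \<alpha> \<beta> n a" and "j \<in> {1..n}" "k \<in> {1..n}"
    and "x \<in> {a (j - 1)<..<a j}" "x \<in> {a (k - 1)<..<a k}"
  shows "j = k"
proof (rule ccontr)
  assume "j \<noteq> k"
  then consider "j < k" | "k < j" by linarith
  then show False
  proof cases
    case 1
    then have "a j \<le> a (k - 1)" using mesh1D_le[OF mesh, of j "k - 1"] assms(3) by auto
    then show ?thesis using assms(4,5) by auto
  next
    case 2
    then have "a k \<le> a (j - 1)" using mesh1D_le[OF mesh, of k "j - 1"] assms(2) by auto
    then show ?thesis using assms(4,5) by auto
  qed
qed

lemma P1_1D_positive_node:
  assumes mesh: "mesh1D \<alpha> \<beta> n a" and w: "w \<in> P1_1D n a"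
    and x: "x \<in> {\<alpha><..<\<beta>}" "0 < w x"
  obtains k where "k \<le> n" "0 < w (a k)"
proof -
  obtain k where k: "k \<in> {1..n}" "a (k - 1) < x" "x \<le> a k"
    using mesh1D_cell_exists[OF mesh x(1)] .
  define \<tau> where "\<tau> = (x - a (k - 1)) / (a k - a (k - 1))"
  have \<tau>: "0 \<le> \<tau>" "\<tau> \<le> 1" using k unfolding \<tau>_def by auto
  have "w x = w (a (k - 1)) + \<tau> * (w (a k) - w (a (k - 1)))"
    using P1_1D_cell_value[OF mesh w k(1), of x] k unfolding \<tau>_def by simp
  then have wx: "w x = (1 - \<tau>) * w (a (k - 1)) + \<tau> * w (a k)" by (simp add: algebra_simps)
  have "0 < w (a (k - 1)) \<or> 0 < w (a k)"
  proof (rule ccontr)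
    assume "\<not> ?thesis"
    then have "(1 - \<tau>) * w (a (k - 1)) \<le> 0" "\<tau> * w (a k) \<le> 0"
      using \<tau> by (auto intro: mult_nonneg_nonpos)
    then show False using wx x(2) by linarith
  qed
  then show ?thesis using that k(1) by (metis atLeastAtMost_iff diff_le_self le_trans)
qed

lemma P1_1D_positive_max_node:
  assumes mesh: "mesh1D \<alpha> \<beta> n a" and w: "w \<in> P1_1D n a"
    and x: "x \<in> {\<alpha><..<\<beta>}" "0 < w x"
  obtains p where "1 \<le> p" "p < n" "\<forall>j\<le>n. w (a j) \<le> w (a p)" "0 < w (a p)"
    "w (a (p + 1)) < w (a p)"
proof -
  obtain k where "k \<le> n" "0 < w (a k)" using P1_1D_positive_node[OF mesh w x] .
  moreover have "w (a 0) = 0" "w (a n) = 0" using w unfolding P1_1D_def by auto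
  ultimately show ?thesis using rightmost_positive_max_index[of "\<lambda>k. w (a k)"] that by metis
qed

definition cell_gain :: "(nat \<Rightarrow> real) \<Rightarrow> (real \<Rightarrow> real) \<Rightarrow> real \<Rightarrow> nat \<Rightarrow> real" where
  "cell_gain a w B k = \<bar>w (a k) - w (a (k - 1))\<bar> * (1 / (a k - a (k - 1))\<^sup>2 - B / 4)"

lemma cell_gain_pos:
  assumes "B * (a k - a (k - 1))\<^sup>2 < 2" "a (k - 1) < a k"
  shows "0 \<le> cell_gain a w B k" and "w (a k) \<noteq> w (a (k - 1)) \<Longrightarrow> 0 < cell_gain a w B k"
proof -
  have "B / 4 * (a k - a (k - 1))\<^sup>2 < 1" using assms(1) by simp
  then have "0 < 1 / (a k - a (k - 1))\<^sup>2 - B / 4" using assms(2) by (simp add: field_simps)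
  then show "0 \<le> cell_gain a w B k" "w (a k) \<noteq> w (a (k - 1)) \<Longrightarrow> 0 < cell_gain a w B k"
    unfolding cell_gain_def by simp_all
qed

text \<open>On the two cells adjacent to \<open>p\<close>, with \<open>E\<close> the drop of \<open>w\<close> along the cell, the gradient
  term equals \<open>E / h\<^sup>2\<close> and \<open>w \<ge> -(1 - \<phi>) E\<close>; on the other cells the hat function vanishes.\<close>

lemma P1_1D_hat_cell_estimate:
  assumes mesh: "mesh1D \<alpha> \<beta> n a" and w: "w \<in> P1_1D n a"
    and f: "f C1_differentiable_on UNIV" "\<forall>\<eta>. 0 \<le> deriv f \<eta> \<and> deriv f \<eta> \<le> B"
    and p: "1 \<le> p" "p < n" and max: "\<forall>j\<le>n. w (a j) \<le> w (a p)" "0 < w (a p)"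
    and k: "k \<in> {1..n}" "x \<in> {a (k - 1)<..<a k}" and st: "s - t = w x"
  shows "deriv w x * deriv (hat1D a p) x + (f s - f t) * hat1D a p x \<ge>
    (if k = p \<or> k = p + 1 then cell_gain a w B k else 0)"
proof -
  define \<phi> where "\<phi> = hat1D a p"
  define h where "h = a k - a (k - 1)"
  define \<tau> where "\<tau> = (x - a (k - 1)) / h"
  define E where "E = \<bar>w (a k) - w (a (k - 1))\<bar>"
  have h: "0 < h" using k unfolding h_def by auto
  have \<tau>: "0 \<le> \<tau>" "\<tau> \<le> 1" using k h unfolding \<tau>_def h_def by auto
  have \<phi>V: "\<phi> \<in> P1_1D n a" unfolding \<phi>_def by (rule hat1D_in_P1_1D[OF mesh p])
  have xk: "x \<in> {a (k - 1)..a k}" using k by auto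
  have val: "v x = v (a (k - 1)) + \<tau> * (v (a k) - v (a (k - 1)))"
    and der: "deriv v x = (v (a k) - v (a (k - 1))) / h" if "v \<in> P1_1D n a" for v
    using P1_1D_cell_value[OF mesh that k(1) xk] P1_1D_cell_deriv[OF mesh that k]
    unfolding \<tau>_def h_def by simp_all
  have node: "\<phi> (a j) = (if j = p then 1 else 0)" if "j \<le> n" for j
    unfolding \<phi>_def using hat1D_node[OF mesh p that] .
  have nodes: "\<phi> (a (k - 1)) = (if k - 1 = p then 1 else 0)" "\<phi> (a k) = (if k = p then 1 else 0)"
    using node[of "k - 1"] node[of k] k by auto
  show ?thesis
  proof (cases "k = p \<or> k = p + 1")
    case True
    have adj: "deriv w x * deriv \<phi> x = E / h\<^sup>2 \<and> s - t \<ge> - ((1 - \<phi> x) * E)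
        \<and> 0 \<le> \<phi> x \<and> \<phi> x \<le> 1"
    proof (cases "k = p")
      case kp: True
      have E: "E = w (a k) - w (a (k - 1))"
        using max(1) k kp unfolding E_def by auto
      have "\<phi> x = \<tau>" "deriv \<phi> x = 1 / h"
        using val[OF \<phi>V] der[OF \<phi>V] nodes kp p by auto
      moreover have "deriv w x = E / h" using der[OF w] E by simp
      moreover have "w x = w (a k) - (1 - \<tau>) * E" unfolding val[OF w] E by (simp add: algebra_simps)
      ultimately show ?thesis using \<tau> st max(2) kp by (simp add: power2_eq_square)
    next
      case False
      then have kp: "k = p + 1" using True by simp
      have E: "E = w (a (k - 1)) - w (a k)"
        using max(1) k kp unfolding E_def by auto
      have "\<phi> x = 1 - \<tau>" "deriv \<phi> x = - 1 / h"
        using val[OF \<phi>V] der[OF \<phi>V] nodes kp by auto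
      moreover have "deriv w x = - E / h" using der[OF w] E by (simp add: divide_simps)
      moreover have "w x = w (a (k - 1)) - \<tau> * E" unfolding val[OF w] E by (simp add: algebra_simps)
      ultimately show ?thesis using \<tau> st max(2) kp by (simp add: power2_eq_square)
    qed
    have "(f s - f t) * \<phi> x \<ge> - B * E / 4"
      by (rule C1_deriv_bounded_weighted_diff_ge[OF f]) (use adj in \<open>auto simp: E_def\<close>)
    then show ?thesis using adj True unfolding \<phi>_def E_def h_def cell_gain_def by (simp add: algebra_simps)
  next
    case False
    then have "\<phi> x = 0" "deriv \<phi> x = 0"
      using val[OF \<phi>V] der[OF \<phi>V] nodes by auto
    then show ?thesis using False unfolding \<phi>_def by simp
  qed
qed

lemma P1_1D_hat_estimate:
  fixes f :: "real \<Rightarrow> real"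
  assumes mesh: "mesh1D \<alpha> \<beta> n a" and V: "u1 \<in> P1_1D n a" "u2 \<in> P1_1D n a"
    and f: "f C1_differentiable_on UNIV" "\<forall>\<eta>. 0 \<le> deriv f \<eta> \<and> deriv f \<eta> \<le> B"
    and p: "1 \<le> p" "p < n"
    and max: "\<forall>j\<le>n. u1 (a j) - u2 (a j) \<le> u1 (a p) - u2 (a p)" "0 < u1 (a p) - u2 (a p)"
    and x: "x \<in> {\<alpha><..<\<beta>}" "x \<notin> a ` {0..n}"
  shows "(\<Sum>k\<in>{p, p + 1}. indicator {a (k - 1)<..<a k} x * cell_gain a (\<lambda>x. u1 x - u2 x) B k)
    \<le> (deriv u1 x * deriv (hat1D a p) x + f (u1 x) * hat1D a p x)
      - (deriv u2 x * deriv (hat1D a p) x + f (u2 x) * hat1D a p x)"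
proof -
  define w where "w x = u1 x - u2 x" for x
  have w: "w \<in> P1_1D n a" unfolding w_def using P1_1D_diff[OF V] .
  obtain k where k: "k \<in> {1..n}" "a (k - 1) < x" "x \<le> a k"
    using mesh1D_cell_exists[OF mesh x(1)] .
  have "x \<noteq> a k" using x(2) k(1) by auto
  then have xk: "x \<in> {a (k - 1)<..<a k}" using k by auto
  have "x \<in> {a (j - 1)<..<a j} \<longleftrightarrow> j = k" if "j \<in> {p, p + 1}" for j
    using mesh1D_open_cells_disjoint[OF mesh _ k(1) _ xk, of j] that p xk by auto
  then have "(\<Sum>j\<in>{p, p + 1}. indicator {a (j - 1)<..<a j} x * cell_gain a w B j)
      = (if k = p \<or> k = p + 1 then cell_gain a w B k else 0)"
    by (simp add: indicator_def)
  also have "\<dots> \<le> deriv w x * deriv (hat1D a p) x + (f (u1 x) - f (u2 x)) * hat1D a p x"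
    using P1_1D_hat_cell_estimate[OF mesh w f p _ _ k(1) xk] max unfolding w_def by auto
  also have "deriv w x = deriv u1 x - deriv u2 x"
    using P1_1D_cell_deriv[OF mesh _ k(1) xk] V w unfolding w_def by (simp add: diff_divide_distrib)
  finally show ?thesis unfolding w_def by (simp add: algebra_simps)
qed

lemma P1_1D_comparison:
  fixes b :: "real \<Rightarrow> real \<Rightarrow> real"
  assumes mesh: "mesh1D \<alpha> \<beta> n a"
    and car: "caratheodory_bounded {\<alpha><..<\<beta>} b B"
    and sub: "discrete_subsol {\<alpha><..<\<beta>} (P1_1D n a) (\<lambda>u v x. deriv u x * deriv v x) b u1"
    and sup: "discrete_supersol {\<alpha><..<\<beta>} (P1_1D n a) (\<lambda>u v x. deriv u x * deriv v x) b u2"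
    and hk: "\<forall>k\<in>{1..n}. B * (a k - a (k - 1))\<^sup>2 < 2"
  shows "\<forall>x\<in>{\<alpha><..<\<beta>}. u1 x \<le> u2 x"
proof (rule ccontr)
  assume "\<not> ?thesis"
  then obtain x0 where x0: "x0 \<in> {\<alpha><..<\<beta>}" "u2 x0 < u1 x0" by auto
  define w where "w x = u1 x - u2 x" for x
  have V: "u1 \<in> P1_1D n a" "u2 \<in> P1_1D n a"
    using sub sup unfolding discrete_subsol_def discrete_supersol_def by auto
  obtain p where p: "1 \<le> p" "p < n" and max: "\<forall>j\<le>n. w (a j) \<le> w (a p)" "0 < w (a p)"
    and drop: "w (a (p + 1)) < w (a p)"
    using P1_1D_positive_max_node[OF mesh P1_1D_diff[OF V] x0(1)] x0(2) unfolding w_def by auto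
  define cell where "cell k = {a (k - 1)<..<a k}" for k
  have cells: "a (k - 1) < a k" "cell k \<subseteq> {\<alpha><..<\<beta>}" if "k \<in> {p, p + 1}" for k
  proof -
    have k: "1 \<le> k" "k \<le> n" using that p by auto
    then have "a 0 \<le> a (k - 1)" "a k \<le> a n" "a (k - 1) < a k"
      using mesh1D_less[OF mesh, of "k - 1" k] mesh1D_le[OF mesh, of 0 "k - 1"] mesh1D_le[OF mesh, of k n]
      by auto
    then show "a (k - 1) < a k" "cell k \<subseteq> {\<alpha><..<\<beta>}" using mesh unfolding cell_def mesh1D_def by auto
  qed
  have hk': "B * (a k - a (k - 1))\<^sup>2 < 2" if "k \<in> {p, p + 1}" for k
  proof -
    have "k \<in> {1..n}" using that p by auto
    then show ?thesis using hk by blast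
  qed
  have meas: "0 < measure lebesgue (cell k)" if "k \<in> {p, p + 1}" for k
    using cells(1)[OF that] unfolding cell_def by simp
  have "0 \<le> cell_gain a w B k * measure lebesgue (cell k)" if "k \<in> {p, p + 1}" for k
    using cell_gain_pos(1)[OF hk'[OF that] cells(1)[OF that]] meas[OF that] by simp
  moreover have "0 < cell_gain a w B (p + 1) * measure lebesgue (cell (p + 1))"
    using cell_gain_pos(2)[OF hk'[of "p + 1"] cells(1)[of "p + 1"]] drop meas[of "p + 1"] by simp
  ultimately have "0 < (\<Sum>k\<in>{p, p + 1}. cell_gain a w B k * measure lebesgue (cell k))"
    by (intro sum_pos2[of _ "p + 1"]) auto
  moreover have "(\<Sum>k\<in>{p, p + 1}. cell_gain a w B k * measure lebesgue (cell k)) \<le> 0"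
  proof (rule subsol_supersol_gain_le_0[OF sub sup hat1D_in_P1_1D[OF mesh p]])
    show "\<forall>x\<in>{\<alpha><..<\<beta>}. 0 \<le> hat1D a p x" using hat1D_nonneg[OF mesh p] by simp
    show "finite {p, p + 1}" "\<forall>k\<in>{p, p + 1}. cell k \<in> lmeasurable" unfolding cell_def by simp_all
    have "x \<notin> cell k" if "k \<in> {p, p + 1}" "x \<notin> {\<alpha><..<\<beta>}" for k x
      using cells(2)[OF that(1)] that(2) by blast
    then show "AE x in lebesgue. x \<notin> {\<alpha><..<\<beta>} \<longrightarrow>
        (\<Sum>k\<in>{p, p + 1}. indicator (cell k) x * cell_gain a w B k) \<le> 0"
      by (simp add: sum.neutral)
    have "AE x in lebesgue. x \<in> {\<alpha><..<\<beta>} \<longrightarrow> b x C1_differentiable_on UNIV \<and>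
        (\<forall>\<eta>. 0 \<le> deriv (b x) \<eta> \<and> deriv (b x) \<eta> \<le> B)"
      using car unfolding caratheodory_bounded_def by simp
    moreover have "AE x in lebesgue. x \<notin> a ` {0..n}"
      by (rule AE_not_in) (simp add: negligible_iff_null_sets[symmetric] negligible_finite)
    ultimately show "AE x in lebesgue. x \<in> {\<alpha><..<\<beta>} \<longrightarrow>
        (\<Sum>k\<in>{p, p + 1}. indicator (cell k) x * cell_gain a w B k)
          \<le> (deriv u1 x * deriv (hat1D a p) x + b x (u1 x) * hat1D a p x)
            - (deriv u2 x * deriv (hat1D a p) x + b x (u2 x) * hat1D a p x)"
    proof eventually_elim
      case (elim x)
      then show ?case
        using P1_1D_hat_estimate[OF mesh V _ _ p max[unfolded w_def], of "b x" B x]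
        unfolding cell_def w_def by blast
    qed
  qed
  ultimately show False by linarith
qed

definition det2 :: "real^2 \<Rightarrow> real^2 \<Rightarrow> real" where
  "det2 u v = u$1 * v$2 - u$2 * v$1"

definition bary_grad :: "real^2 \<Rightarrow> real^2 \<Rightarrow> real^2 \<Rightarrow> real^2" where
  "bary_grad p q r = (\<chi> i. if i = 1 then (q$2 - r$2) / det2 (q - p) (r - p) else (r$1 - q$1) / det2 (q - p) (r - p))"
definition bary_const :: "real^2 \<Rightarrow> real^2 \<Rightarrow> real^2 \<Rightarrow> real" where
  "bary_const p q r = det2 q r / det2 (q - p) (r - p)"
definition bary :: "real^2 \<Rightarrow> real^2 \<Rightarrow> real^2 \<Rightarrow> real^2 \<Rightarrow> real" where
  "bary p q r x = bary_grad p q r \<bullet> x + bary_const p q r"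

lemma inner_vec2: "(u::real^2) \<bullet> v = u$1 * v$1 + u$2 * v$2"
  by (simp add: inner_vec_def sum_2)

lemma bary_grad_nth:
  "bary_grad p q r $ 1 = (q$2 - r$2) / det2 (q - p) (r - p)"
  "bary_grad p q r $ 2 = (r$1 - q$1) / det2 (q - p) (r - p)"
  by (simp_all add: bary_grad_def)

lemma bary_formula:
  "bary p q r x = ((q$2 - r$2) * x$1 + (r$1 - q$1) * x$2 + det2 q r) / det2 (q - p) (r - p)"
  unfolding bary_def bary_const_def inner_vec2 bary_grad_nth by (simp add: add_divide_distrib)

lemma bary_vertices:
  assumes "det2 (q - p) (r - p) \<noteq> 0"
  shows "bary p q r p = 1" "bary p q r q = 0" "bary p q r r = 0"
proof -
  have e: "(q$2 - r$2) * p$1 + (r$1 - q$1) * p$2 + det2 q r = det2 (q - p) (r - p)"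
    unfolding det2_def by (simp add: algebra_simps)
  show "bary p q r p = 1" unfolding bary_formula e using assms by simp
  show "bary p q r q = 0" unfolding bary_formula det2_def by (simp add: algebra_simps)
  show "bary p q r r = 0" unfolding bary_formula det2_def by (simp add: algebra_simps)
qed

lemma inner_affine_sum:
  fixes c :: "'a::real_inner"
  assumes "sum u S = 1"
  shows "c \<bullet> (\<Sum>s\<in>S. u s *\<^sub>R s) + d = (\<Sum>s\<in>S. u s * (c \<bullet> s + d))"
proof -
  have "c \<bullet> (\<Sum>s\<in>S. u s *\<^sub>R s) = (\<Sum>s\<in>S. u s * (c \<bullet> s))"
    by (simp add: inner_sum_right)
  moreover have "d = (\<Sum>s\<in>S. u s * d)" using assms by (simp add: sum_distrib_right[symmetric])
  ultimately show ?thesis by (simp add: sum.distrib distrib_left)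
qed

lemma bary_affine_sum:
  assumes "det2 (q - p) (r - p) \<noteq> 0" "S \<subseteq> {p, q, r}" "sum u S = 1" "x = (\<Sum>s\<in>S. u s *\<^sub>R s)"
    and "finite S"
  shows "bary p q r x = (if p \<in> S then u p else 0)"
proof -
  have "bary p q r x = (\<Sum>s\<in>S. u s * bary p q r s)"
    unfolding bary_def assms(4) by (rule inner_affine_sum[OF assms(3)])
  also have "\<dots> = (\<Sum>s\<in>S. if s = p then u s else 0)"
  proof (rule sum.cong[OF refl])
    fix s assume "s \<in> S"
    then have "s = p \<or> s = q \<or> s = r" using assms(2) by auto
    then show "u s * bary p q r s = (if s = p then u s else 0)"
      using bary_vertices[OF assms(1)] by (cases "s = p") auto
  qed
  also have "\<dots> = (if p \<in> S then u p else 0)"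
    using assms(5) by (simp add: sum.delta)
  finally show ?thesis .
qed

lemma det2_neq_0_if_not_collinear:
  assumes "\<not> collinear {p, q, r}"
  shows "det2 (q - p) (r - p) \<noteq> 0"
proof
  assume d: "det2 (q - p) (r - p) = 0"
  define a where "a = q - p"
  define b where "b = r - p"
  have d': "a$1 * b$2 = a$2 * b$1" using d unfolding det2_def a_def b_def by simp
  have "collinear {0, a, b}"
  proof (cases "a = 0")
    case True then show ?thesis by (simp add: collinear_lemma)
  next
    case False
    then have n: "a$1 * a$1 + a$2 * a$2 \<noteq> 0"
      by (metis (no_types, lifting) inner_vec2 inner_eq_zero_iff)
    define c where "c = (a \<bullet> b) / (a$1 * a$1 + a$2 * a$2)"
    have "b = c *\<^sub>R a"
    proof -
      have "b$1 = c * a$1"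
        unfolding c_def inner_vec2 using n d' by (simp add: field_simps)
      moreover have "b$2 = c * a$2"
        unfolding c_def inner_vec2 using n d' by (simp add: field_simps)
      ultimately show ?thesis by (simp add: vec_eq_iff forall_2)
    qed
    then show ?thesis by (auto simp: collinear_lemma)
  qed
  then have "collinear {q, p, r}"
    using collinear_3[of q p r] unfolding a_def b_def by simp
  then have "collinear {p, q, r}" by (simp add: insert_commute)
  then show False using assms by simp
qed

lemma convex_combination_in_interior_triangle:
  fixes p q r :: "real^2"
  assumes nc: "\<not> collinear {p, q, r}" and d: "p \<noteq> q" "p \<noteq> r" "q \<noteq> r"
    and pos: "a > 0" "b > 0" "c > 0" "a + b + c = 1"
  shows "a *\<^sub>R p + b *\<^sub>R q + c *\<^sub>R r \<in> interior (convex hull {p, q, r})"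
proof -
  have ind: "\<not> affine_dependent {p, q, r}" using nc collinear_3_eq_affine_dependent by blast
  have card: "\<not> card {p, q, r} \<le> DIM(real^2)" using d by simp
  define u where "u v = (if v = p then a else if v = q then b else c)" for v
  have "(\<forall>x\<in>{p, q, r}. 0 < u x) \<and> sum u {p, q, r} = 1 \<and> (\<Sum>x\<in>{p, q, r}. u x *\<^sub>R x) = a *\<^sub>R p + b *\<^sub>R q + c *\<^sub>R r"
    using d pos unfolding u_def by (simp add: algebra_simps)
  then show ?thesis
    unfolding interior_convex_hull_explicit_minimal[OF ind] using card by auto
qed

lemma interior_triangle_nonempty:
  fixes p q r :: "real^2"
  assumes nc: "\<not> collinear {p, q, r}" and d: "p \<noteq> q" "p \<noteq> r" "q \<noteq> r"
  shows "interior (convex hull {p, q, r}) \<noteq> {}"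
  using convex_combination_in_interior_triangle[OF assms, of "1/3" "1/3" "1/3"] by auto

lemma det2_lagrange_identity: "((u::real^2) \<bullet> v)^2 + (det2 u v)^2 = (norm u)^2 * (norm v)^2"
  unfolding power2_norm_eq_inner inner_vec2 det2_def by (simp add: power2_eq_square algebra_simps)

lemma cot_vangle:
  fixes u v :: "real^2"
  assumes "det2 u v \<noteq> 0"
  shows "cot (vangle u v) = (u \<bullet> v) / \<bar>det2 u v\<bar>"
proof -
  have u: "u \<noteq> 0" and v: "v \<noteq> 0" using assms unfolding det2_def by auto
  have nu: "norm u > 0" and nv: "norm v > 0" using u v by auto
  define k where "k = (u \<bullet> v) / (norm u * norm v)"
  have kb: "\<bar>u \<bullet> v\<bar> \<le> norm u * norm v" by (rule Cauchy_Schwarz_ineq2)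
  have k1: "-1 \<le> k" "k \<le> 1" using kb nu nv unfolding k_def by (auto simp: field_simps abs_le_iff)
  have "1 - k^2 = (det2 u v)^2 / (norm u * norm v)^2"
    using det2_lagrange_identity[of u v] nu nv unfolding k_def by (simp add: field_simps power2_eq_square)
  then have s: "sin (arccos k) = \<bar>det2 u v\<bar> / (norm u * norm v)"
    using nu nv by (simp add: sin_arccos k1 real_sqrt_divide)
  have "cot (vangle u v) = cos (arccos k) / sin (arccos k)"
    unfolding vangle_def k_def cot_def by simp
  also have "\<dots> = k / (\<bar>det2 u v\<bar> / (norm u * norm v))" using s k1 by simp
  also have "\<dots> = (u \<bullet> v) / \<bar>det2 u v\<bar>" using nu nv unfolding k_def by (simp add: field_simps)
  finally show ?thesis .
qed

text \<open>The affine image \<open>z \<mapsto> p + z\<^sub>1 (q - p) + z\<^sub>2 (r - p)\<close> of the square \<open>[0, 1/2]\<^sup>2\<close> lies in the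
  triangle (whose area is in fact \<open>|det| / 2\<close>).\<close>

lemma measure_triangle_ge:
  fixes p q r :: "real^2"
  shows "measure lebesgue (convex hull {p, q, r}) \<ge> \<bar>det2 (q - p) (r - p)\<bar> / 4"
proof -
  define L where "L z = z$1 *\<^sub>R (q - p) + z$2 *\<^sub>R (r - p)" for z :: "real^2"
  have lin: "linear L" unfolding L_def by (auto intro!: linearI simp: algebra_simps)
  define C where "C = cbox (0::real^2) (\<chi> i. 1/2)"
  have Cm: "C \<in> lmeasurable" unfolding C_def by simp
  have mC: "measure lebesgue C = 1/4"
  proof -
    have "measure lebesgue C = measure lborel C"
      unfolding C_def by (simp add: measure_completion)
    also have "\<dots> = 1/4" unfolding C_def
      by (subst content_cbox_cart) (auto simp: interval_eq_empty_cart forall_2 UNIV_2)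
    finally show ?thesis .
  qed
  have mat: "det (matrix L) = det2 (q - p) (r - p)"
    unfolding det_2 matrix_def L_def det2_def by (simp add: axis_def)
  have mL: "measure lebesgue (L ` C) = \<bar>det2 (q - p) (r - p)\<bar> / 4"
    using measure_linear_image[OF lin Cm] mat mC by simp
  have LCm: "L ` C \<in> lmeasurable" using measurable_linear_image[OF lin Cm] .
  have mT: "measure lebesgue ((+) p ` (L ` C)) = measure lebesgue (L ` C)"
    by (rule measure_translation)
  have sub: "(+) p ` (L ` C) \<subseteq> convex hull {p, q, r}"
  proof
    fix y assume "y \<in> (+) p ` (L ` C)"
    then obtain z where z: "z \<in> C" "y = p + L z" by auto
    have z1: "0 \<le> z$1" "z$1 \<le> 1/2" "0 \<le> z$2" "z$2 \<le> 1/2"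
      using z(1) unfolding C_def by (auto simp: mem_box_cart)
    have "y = (1 - z$1 - z$2) *\<^sub>R p + z$1 *\<^sub>R q + z$2 *\<^sub>R r"
      using z(2) unfolding L_def by (simp add: algebra_simps)
    then show "y \<in> convex hull {p, q, r}"
      unfolding convex_hull_3 using z1 by (intro CollectI exI[of _ "1 - z$1 - z$2"] exI[of _ "z$1"] exI[of _ "z$2"]) auto
  qed
  have "measure lebesgue ((+) p ` (L ` C)) \<le> measure lebesgue (convex hull {p, q, r})"
  proof (rule measure_mono_fmeasurable[OF sub])
    show "(+) p ` L ` C \<in> sets lebesgue" using measurable_translation[OF LCm, of p] by (simp add: fmeasurable_def)
    show "convex hull {p, q, r} \<in> fmeasurable lebesgue"
      by (rule lmeasurable_compact) (auto intro!: finite_imp_compact_convex_hull)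
  qed
  then show ?thesis using mT mL by simp
qed

lemma finite_tri_angles:
  assumes "finite T"
  shows "finite (tri_angles T)"
proof -
  have "tri_angles T \<subseteq> (\<lambda>(p, q, r). vangle (q - p) (r - p)) ` (T \<times> T \<times> T)"
    unfolding tri_angles_def by force
  then show ?thesis by (rule finite_subset) (use assms in auto)
qed

lemma inner_affine_3:
  fixes c0 :: "'a::real_inner"
  assumes "a + b + c = 1"
  shows "c0 \<bullet> (a *\<^sub>R p + b *\<^sub>R q + c *\<^sub>R r) + d0 = a * (c0 \<bullet> p + d0) + b * (c0 \<bullet> q + d0) + c * (c0 \<bullet> r + d0)"
proof -
  have "d0 = (a + b + c) * d0" using assms by simp
  then show ?thesis by (simp add: inner_add_right algebra_simps)
qed

lemma bary_convex_3:
  assumes "det2 (q - p) (r - p) \<noteq> 0" "a + b + c = 1"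
  shows "bary p q r (a *\<^sub>R p + b *\<^sub>R q + c *\<^sub>R r) = a"
  using inner_affine_3[OF assms(2), of "bary_grad p q r" p q r "bary_const p q r"] bary_vertices[OF assms(1)]
  unfolding bary_def by simp

lemma bary_grad_inner_cot:
  fixes p q r c :: "real^2"
  assumes det: "det2 (q - p) (r - p) \<noteq> 0"
  shows "c \<bullet> bary_grad p q r =
    (c \<bullet> (p - q) * cot (vangle (p - r) (q - r)) + c \<bullet> (p - r) * cot (vangle (p - q) (r - q)))
      / \<bar>det2 (q - p) (r - p)\<bar>"
proof -
  define \<Delta> where "\<Delta> = det2 (q - p) (r - p)"
  have \<Delta>: "\<Delta> \<noteq> 0" using det \<Delta>_def by simp
  have cot_r: "(p - r) \<bullet> (q - r) = \<bar>\<Delta>\<bar> * cot (vangle (p - r) (q - r))"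
  proof -
    have "det2 (p - r) (q - r) = \<Delta>" unfolding \<Delta>_def det2_def by (simp add: algebra_simps)
    then show ?thesis using cot_vangle[of "p - r" "q - r"] \<Delta> by simp
  qed
  have cot_q: "(p - q) \<bullet> (r - q) = \<bar>\<Delta>\<bar> * cot (vangle (p - q) (r - q))"
  proof -
    have "det2 (p - q) (r - q) = - \<Delta>" unfolding \<Delta>_def det2_def by (simp add: algebra_simps)
    then show ?thesis using cot_vangle[of "p - q" "r - q"] \<Delta> by simp
  qed
  define X where "X = c$1 * (q$2 - r$2) + c$2 * (r$1 - q$1)"
  define S where "S = c \<bullet> (p - q) * cot (vangle (p - r) (q - r)) + c \<bullet> (p - r) * cot (vangle (p - q) (r - q))"
  have "\<Delta> * X = c \<bullet> (p - q) * ((p - r) \<bullet> (q - r)) + c \<bullet> (p - r) * ((p - q) \<bullet> (r - q))"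
    unfolding \<Delta>_def X_def det2_def inner_vec2 vector_minus_component by algebra
  then have "\<Delta> * X = \<bar>\<Delta>\<bar> * S" unfolding cot_r cot_q S_def by (simp add: algebra_simps)
  then have "X / \<Delta> = S / \<bar>\<Delta>\<bar>" using \<Delta> by (cases "0 < \<Delta>") (auto simp: field_simps)
  moreover have "c \<bullet> bary_grad p q r = X / \<Delta>"
    unfolding inner_vec2 bary_grad_nth X_def \<Delta>_def by (simp add: add_divide_distrib)
  ultimately show ?thesis unfolding S_def \<Delta>_def by simp
qed

lemma conforming_triangulationD:
  assumes "conforming_triangulation \<Omega> \<T>"
  shows "finite \<T>" "\<And>T. T \<in> \<T> \<Longrightarrow> card T = 3" "\<And>T. T \<in> \<T> \<Longrightarrow> \<not> collinear T"
    "\<And>T. T \<in> \<T> \<Longrightarrow> finite T"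
    "\<Omega> = interior (\<Union>T\<in>\<T>. convex hull T)"
    "\<And>T1 T2. T1 \<in> \<T> \<Longrightarrow> T2 \<in> \<T> \<Longrightarrow> T1 \<noteq> T2 \<Longrightarrow>
       convex hull T1 \<inter> convex hull T2 = convex hull (T1 \<inter> T2)"
  using assms unfolding conforming_triangulation_def by (auto intro: card_ge_0_finite)

lemma conforming_triangle_vertices:
  assumes "conforming_triangulation \<Omega> \<T>" "T \<in> \<T>" "p \<in> T"
  obtains q r where "T = {p, q, r}" "p \<noteq> q" "p \<noteq> r" "q \<noteq> r" "det2 (q - p) (r - p) \<noteq> 0"
proof -
  obtain x y z where T: "T = {x, y, z}" "x \<noteq> y" "y \<noteq> z" "x \<noteq> z"
    using conforming_triangulationD(2)[OF assms(1,2)] by (meson card_3_iff)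
  obtain q r where qr: "T = {p, q, r}" "p \<noteq> q" "p \<noteq> r" "q \<noteq> r"
    using assms(3) T by (auto simp: insert_commute)
  moreover have "det2 (q - p) (r - p) \<noteq> 0"
    using det2_neq_0_if_not_collinear conforming_triangulationD(3)[OF assms(1,2)] qr(1) by simp
  ultimately show ?thesis using that by blast
qed

lemma conforming_hull_inter:
  assumes "conforming_triangulation \<Omega> \<T>" "T \<in> \<T>" "T' \<in> \<T>" "x \<in> convex hull T" "x \<in> convex hull T'"
  obtains u where "\<forall>s\<in>T \<inter> T'. 0 \<le> u s" "sum u (T \<inter> T') = 1" "(\<Sum>s\<in>T \<inter> T'. u s *\<^sub>R s) = x"
proof -
  have fin: "finite (T \<inter> T')" using conforming_triangulationD(4)[OF assms(1,2)] by simp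
  have "x \<in> convex hull (T \<inter> T')"
    using conforming_triangulationD(6)[OF assms(1,2,3)] assms(4,5) by (cases "T = T'") auto
  then show ?thesis using convex_hull_finite[OF fin] that by auto
qed

lemma conforming_bary_nonzero_imp_vertex:
  assumes conf: "conforming_triangulation \<Omega> \<T>" and T: "T \<in> \<T>" "T' \<in> \<T>" "T = {q, p, r}"
    and det: "det2 (p - q) (r - q) \<noteq> 0"
    and y: "y \<in> convex hull T" "y \<in> convex hull T'" and "bary q p r y \<noteq> 0"
  shows "q \<in> T'"
proof -
  obtain u where u: "sum u (T \<inter> T') = 1" "(\<Sum>s\<in>T \<inter> T'. u s *\<^sub>R s) = y"
    using conforming_hull_inter[OF conf T(1,2) y] by metis
  have "bary q p r y = (if q \<in> T \<inter> T' then u q else 0)"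
    by (rule bary_affine_sum[OF det]) (use u T conforming_triangulationD(4)[OF conf T(1)] in auto)
  then show ?thesis using \<open>bary q p r y \<noteq> 0\<close> by (auto split: if_splits)
qed

lemma conforming_vertex_in_hull:
  assumes conf: "conforming_triangulation \<Omega> \<T>" and "T \<in> \<T>" "T' \<in> \<T>" "v \<in> T"
    and "v \<in> convex hull T'"
  shows "v \<in> T'"
proof -
  obtain q r where T: "T = {v, q, r}" "det2 (q - v) (r - v) \<noteq> 0"
    using conforming_triangle_vertices[OF conf assms(2,4)] by metis
  show ?thesis
    by (rule conforming_bary_nonzero_imp_vertex[OF conf assms(2,3) T])
       (use assms(4,5) bary_vertices(1)[OF T(2)] in \<open>auto intro: hull_inc\<close>)
qed

lemma finite_closed_avoid_ball:
  assumes "finite F" "\<forall>S\<in>F. closed S"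
  obtains e where "0 < e" "\<forall>S\<in>F. y \<notin> S \<longrightarrow> ball y e \<inter> S = {}"
proof -
  define C where "C = \<Union>{S\<in>F. y \<notin> S}"
  have "closed C" unfolding C_def using assms by (intro closed_Union) auto
  moreover have "y \<notin> C" unfolding C_def by auto
  ultimately obtain e where "e > 0" "ball y e \<subseteq> - C"
    using open_contains_ball[of "- C"] by (auto simp: open_Compl)
  then show ?thesis unfolding C_def by (intro that[of e]) auto
qed

lemma conforming_ball_hull_contains:
  assumes conf: "conforming_triangulation \<Omega> \<T>"
  obtains e where "0 < e" "\<forall>T\<in>\<T>. convex hull T \<inter> ball y e \<noteq> {} \<longrightarrow> y \<in> convex hull T"
proof -
  have "finite ((\<lambda>T. convex hull T) ` \<T>)" "\<forall>S\<in>(\<lambda>T. convex hull T) ` \<T>. closed S"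
    using conforming_triangulationD(1,4)[OF conf]
    by (auto intro: compact_imp_closed finite_imp_compact_convex_hull)
  then obtain e where "0 < e" "\<forall>T\<in>\<T>. y \<notin> convex hull T \<longrightarrow> ball y e \<inter> convex hull T = {}"
    using finite_closed_avoid_ball by (metis (no_types, lifting) image_eqI)
  then show ?thesis using that by blast
qed

text \<open>The image of \<open>ball y e\<close> under the homothety with centre \<open>q\<close> and ratio \<open>\<rho>\<close> stays in the
  union, because every piece meeting the ball is convex and contains \<open>q\<close>.\<close>

lemma homothety_in_interior_Union_convex:
  fixes y q :: "'a::real_normed_vector"
  assumes convex: "\<forall>C\<in>F. convex C" and ball: "ball y e \<subseteq> \<Union>F" "0 < e"
    and meet: "\<forall>C\<in>F. C \<inter> ball y e \<noteq> {} \<longrightarrow> q \<in> C" and \<rho>: "0 < \<rho>" "\<rho> \<le> 1"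
  shows "q + \<rho> *\<^sub>R (y - q) \<in> interior (\<Union>F)"
proof -
  define x where "x = q + \<rho> *\<^sub>R (y - q)"
  have "ball x (\<rho> * e) \<subseteq> \<Union>F"
  proof
    fix z' assume z': "z' \<in> ball x (\<rho> * e)"
    define z where "z = q + (1 / \<rho>) *\<^sub>R (z' - q)"
    have "z - y = (1 / \<rho>) *\<^sub>R (z' - x)"
      unfolding z_def x_def using \<rho> by (simp add: algebra_simps)
    then have "norm (z - y) = norm (z' - x) / \<rho>" using \<rho> by simp
    then have "dist y z = norm (z' - x) / \<rho>" by (simp add: dist_norm norm_minus_commute)
    also have "\<dots> < e" using z' \<rho> by (simp add: dist_norm norm_minus_commute field_simps)
    finally have zb: "z \<in> ball y e" by simp
    then obtain C where C: "C \<in> F" "z \<in> C" using ball by auto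
    then have "C \<inter> ball y e \<noteq> {}" using zb by auto
    then have "q \<in> C" using meet C(1) by blast
    moreover have "z' = (1 - \<rho>) *\<^sub>R q + \<rho> *\<^sub>R z" unfolding z_def using \<rho> by (simp add: algebra_simps)
    ultimately have "z' \<in> C" using C convex \<rho> convexD[of C q z "1 - \<rho>" \<rho>] by auto
    then show "z' \<in> \<Union>F" using C(1) by auto
  qed
  then show ?thesis unfolding x_def[symmetric] using \<rho> ball(2) by (meson mem_interior mult_pos_pos)
qed

text \<open>Choose a point \<open>y\<close> of the edge so close to \<open>p\<close> that it lies in \<open>\<Omega>\<close>. The barycentric
  coordinate of \<open>q\<close> at \<open>y\<close> is positive, so every triangle near \<open>y\<close> has \<open>q\<close> as a vertex, and the
  homothety with centre \<open>q\<close> carrying \<open>y\<close> to the given point maps a ball around \<open>y\<close> into the mesh.\<close>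

lemma conforming_edge_in_domain:
  assumes conf: "conforming_triangulation \<Omega> \<T>" and T: "T \<in> \<T>" "p \<in> T" "q \<in> T" "p \<noteq> q"
    and pO: "p \<in> \<Omega>" and t: "0 < t" "t < 1"
  shows "(1 - t) *\<^sub>R p + t *\<^sub>R q \<in> \<Omega>"
proof -
  define U where "U = (\<Union>T\<in>\<T>. convex hull T)"
  have OU: "\<Omega> = interior U" using conforming_triangulationD(5)[OF conf] unfolding U_def .
  obtain x z where "T = {q, x, z}" "q \<noteq> x" "q \<noteq> z" "x \<noteq> z"
    using conforming_triangle_vertices[OF conf T(1,3)] by metis
  then obtain r where Tqpr: "T = {q, p, r}"
    using T(2,4) by (auto simp: insert_commute)
  then have det: "det2 (p - q) (r - q) \<noteq> 0"
    using det2_neq_0_if_not_collinear conforming_triangulationD(3)[OF conf T(1)] by simp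
  obtain \<delta> where \<delta>: "\<delta> > 0" "ball p \<delta> \<subseteq> \<Omega>"
    using pO open_contains_ball[of \<Omega>] OU by auto
  have nqp: "norm (q - p) > 0" using T(4) by simp
  define s where "s = min t (\<delta> / (2 * norm (q - p)))"
  have s: "0 < s" "s \<le> t" "s < 1" using t \<delta> nqp unfolding s_def by auto
  define y where "y = (1 - s) *\<^sub>R p + s *\<^sub>R q"
  have "dist p y = s * norm (q - p)"
    unfolding y_def dist_norm using s
    by (simp add: algebra_simps norm_minus_commute flip: scaleR_diff_right)
  also have "\<dots> < \<delta>" using nqp \<delta> unfolding s_def by (simp add: min_def field_simps)
  finally have yO: "y \<in> \<Omega>" using \<delta> by auto
  have "y = s *\<^sub>R q + (1 - s) *\<^sub>R p + 0 *\<^sub>R r" unfolding y_def by simp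
  then have bary_y: "bary q p r y = s" using bary_convex_3[OF det, of s "1 - s" 0] by simp
  have yT: "y \<in> convex hull T" unfolding Tqpr y_def convex_hull_3
    using s by (intro CollectI exI[of _ s] exI[of _ "1 - s"] exI[of _ 0]) auto
  obtain e1 where e1: "0 < e1" "\<forall>T'\<in>\<T>. convex hull T' \<inter> ball y e1 \<noteq> {} \<longrightarrow> y \<in> convex hull T'"
    using conforming_ball_hull_contains[OF conf] by metis
  obtain e2 where e2: "0 < e2" "ball y e2 \<subseteq> \<Omega>" using yO OU open_contains_ball[of \<Omega>] by auto
  define e where "e = min e1 e2"
  have meet: "\<forall>C\<in>(\<lambda>T. convex hull T) ` \<T>. C \<inter> ball y e \<noteq> {} \<longrightarrow> q \<in> C"
  proof (intro ballI impI)
    fix C assume C: "C \<in> (\<lambda>T. convex hull T) ` \<T>" "C \<inter> ball y e \<noteq> {}"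
    then obtain T' where T': "T' \<in> \<T>" "C = convex hull T'" by auto
    have "convex hull T' \<inter> ball y e1 \<noteq> {}" using C(2) T'(2) unfolding e_def by auto
    then have "y \<in> convex hull T'" using e1 T'(1) by auto
    then have "q \<in> T'"
      using conforming_bary_nonzero_imp_vertex[OF conf T(1) T'(1) Tqpr det yT] bary_y s by auto
    then show "q \<in> C" using T'(2) by (simp add: hull_inc)
  qed
  have "ball y e \<subseteq> \<Union>((\<lambda>T. convex hull T) ` \<T>)"
    using e2 OU interior_subset unfolding e_def U_def by fastforce
  moreover have "q + ((1 - t) / (1 - s)) *\<^sub>R (y - q) = (1 - t) *\<^sub>R p + t *\<^sub>R q"
  proof -
    have "y - q = (1 - s) *\<^sub>R (p - q)" unfolding y_def by (simp add: algebra_simps)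
    then have "q + ((1 - t) / (1 - s)) *\<^sub>R (y - q) = q + (1 - t) *\<^sub>R (p - q)" using s by simp
    then show ?thesis by (simp add: algebra_simps)
  qed
  ultimately show ?thesis
    using homothety_in_interior_Union_convex[of _ y e q "(1 - t) / (1 - s)"] meet e1 e2 s t OU
    unfolding e_def U_def by auto
qed

definition triangulation_skeleton :: "(real^2) set set \<Rightarrow> (real^2) set" where
  "triangulation_skeleton \<T> = (\<Union>T\<in>\<T>. frontier (convex hull T)) \<union>
     (\<Union>T\<in>\<T>. \<Union>T'\<in>\<T> - {T}. convex hull T \<inter> convex hull T')"

lemma negligible_triangulation_skeleton:
  assumes conf: "conforming_triangulation \<Omega> \<T>"
  shows "negligible (triangulation_skeleton \<T>)"
proof -
  note \<T> = conforming_triangulationD[OF conf]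
  have overlap: "negligible (convex hull T \<inter> convex hull T')"
    if TT: "T \<in> \<T>" "T' \<in> \<T>" "T' \<noteq> T" for T T'
  proof -
    obtain x y z where xyz: "T = {x, y, z}" "x \<noteq> y" "y \<noteq> z" "x \<noteq> z"
      using \<T>(2)[OF TT(1)] card_3_iff[of T] by blast
    then have "\<not> affine_dependent T"
      using \<T>(3)[OF TT(1)] collinear_3_eq_affine_dependent[of x y z] by simp
    then have ind: "\<not> affine_dependent (T \<inter> T')" using affine_dependent_subset by blast
    have "T \<inter> T' \<noteq> T"
    proof
      assume "T \<inter> T' = T"
      then have "T \<subseteq> T'" by blast
      then show False
        using TT(3) card_subset_eq[OF \<T>(4)[OF TT(2)]] \<T>(2)[OF TT(1)] \<T>(2)[OF TT(2)] by auto
    qed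
    then have "card (T \<inter> T') < card T" using \<T>(4)[OF TT(1)] by (intro psubset_card_mono) auto
    then have "card (T \<inter> T') \<le> DIM(real^2)" using \<T>(2)[OF TT(1)] by simp
    then have "interior (convex hull (T \<inter> T')) = {}"
      using interior_convex_hull_explicit_minimal[OF ind] by simp
    then show ?thesis using \<T>(6)[OF TT(1,2)] TT(3) by (simp add: negligible_convex_interior)
  qed
  have "negligible (\<Union>T\<in>\<T>. frontier (convex hull T))"
    by (rule negligible_Union) (use \<T>(1) in \<open>auto intro: negligible_convex_frontier\<close>)
  moreover have "negligible (\<Union>T'\<in>\<T> - {T}. convex hull T \<inter> convex hull T')" if "T \<in> \<T>" for T
    by (rule negligible_Union) (use \<T>(1) overlap that in auto)
  then have "negligible (\<Union>T\<in>\<T>. \<Union>T'\<in>\<T> - {T}. convex hull T \<inter> convex hull T')"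
    by (intro negligible_Union) (use \<T>(1) in auto)
  ultimately show ?thesis unfolding triangulation_skeleton_def by (rule negligible_Un)
qed

lemma triangulation_skeleton_interior:
  assumes conf: "conforming_triangulation \<Omega> \<T>" and "T \<in> \<T>" "x \<in> convex hull T"
    and "x \<notin> triangulation_skeleton \<T>"
  shows "x \<in> interior (convex hull T)"
proof -
  have "closed (convex hull T)"
    using conforming_triangulationD(4)[OF conf assms(2)]
    by (simp add: compact_imp_closed finite_imp_compact_convex_hull)
  then show ?thesis
    using assms(2-4) unfolding triangulation_skeleton_def frontier_def by (auto simp: closure_closed)
qed

lemma triangulation_skeleton_unique:
  assumes "T \<in> \<T>" "T' \<in> \<T>" "x \<in> convex hull T" "x \<in> convex hull T'"
    and "x \<notin> triangulation_skeleton \<T>"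
  shows "T = T'"
  using assms unfolding triangulation_skeleton_def by blast

lemma conforming_vertex_in_closure:
  assumes conf: "conforming_triangulation \<Omega> \<T>" and "T \<in> \<T>" "p \<in> T"
  shows "p \<in> closure \<Omega>"
proof -
  note \<T> = conforming_triangulationD[OF conf]
  obtain q r where T: "T = {p, q, r}" "p \<noteq> q" "p \<noteq> r" "q \<noteq> r"
    using conforming_triangle_vertices[OF conf assms(2,3)] by metis
  have "interior (convex hull T) \<noteq> {}"
    using interior_triangle_nonempty[of p q r] \<T>(3)[OF assms(2)] T by simp
  then have "closure (interior (convex hull T)) = convex hull T"
    using convex_closure_interior[of "convex hull T"] \<T>(4)[OF assms(2)]
    by (simp add: closure_closed compact_imp_closed finite_imp_compact_convex_hull)
  moreover have "interior (convex hull T) \<subseteq> \<Omega>"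
    unfolding \<T>(5) using assms(2) by (intro interior_mono) auto
  ultimately have "convex hull T \<subseteq> closure \<Omega>" by (metis closure_mono)
  then show ?thesis using hull_inc[OF assms(3)] by auto
qed

lemma conforming_triangle_measure_pos:
  assumes conf: "conforming_triangulation \<Omega> \<T>" and "T \<in> \<T>"
  shows "0 < measure lebesgue (convex hull T)"
proof -
  obtain p where "p \<in> T" using conforming_triangulationD(2)[OF conf assms(2)] by fastforce
  then obtain q r where qr: "T = {p, q, r}" "det2 (q - p) (r - p) \<noteq> 0"
    by (rule conforming_triangle_vertices[OF conf assms(2)])
  have "0 < \<bar>det2 (q - p) (r - p)\<bar> / 4" using qr(2) by simp
  then show ?thesis using measure_triangle_ge[where p=p and q=q and r=r] unfolding qr(1) by linarith
qed

lemma conforming_interior_vertex_right_neighbour: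
  assumes conf: "conforming_triangulation \<Omega> \<T>" and "T \<in> \<T>" "p \<in> T" "p \<in> \<Omega>"
  obtains T' q where "T' \<in> \<T>" "p \<in> T'" "q \<in> T'" "p $ 1 < q $ 1"
proof -
  note \<T> = conforming_triangulationD[OF conf]
  obtain e1 where e1: "0 < e1" "\<forall>T'\<in>\<T>. convex hull T' \<inter> ball p e1 \<noteq> {} \<longrightarrow> p \<in> convex hull T'"
    using conforming_ball_hull_contains[OF conf] by metis
  obtain e2 where e2: "0 < e2" "ball p e2 \<subseteq> \<Omega>"
    using assms(4) \<T>(5) open_contains_ball[of \<Omega>] by auto
  define z where "z = p + (min e1 e2 / 2) *\<^sub>R axis 1 (1::real)"
  have z: "z \<in> ball p e1" "z \<in> ball p e2" unfolding z_def using e1 e2 by (auto simp: dist_norm)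
  then have "z \<in> (\<Union>T\<in>\<T>. convex hull T)" using e2 \<T>(5) interior_subset by blast
  then obtain T' where T': "T' \<in> \<T>" "z \<in> convex hull T'" by auto
  then have "p \<in> T'"
    using e1 z conforming_vertex_in_hull[OF conf assms(2) T'(1) assms(3)] by blast
  moreover have "\<exists>q\<in>T'. p $ 1 < q $ 1"
  proof (rule ccontr)
    assume "\<not> ?thesis"
    then have "T' \<subseteq> {x. axis 1 1 \<bullet> x \<le> p $ 1}" by (auto simp: inner_axis' not_less)
    then have "convex hull T' \<subseteq> {x. axis 1 1 \<bullet> x \<le> p $ 1}"
      using hull_minimal convex_halfspace_le by blast
    then have "convex hull T' \<subseteq> {x. x $ 1 \<le> p $ 1}" by (simp add: inner_axis')
    then have "z $ 1 \<le> p $ 1" using T'(2) by auto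
    then show False unfolding z_def using e1 e2 by (simp add: axis_def)
  qed
  ultimately show ?thesis using that T'(1) by blast
qed

lemma convex_hull_3_bary:
  assumes det: "det2 (q - p) (r - p) \<noteq> 0" and x: "x \<in> convex hull {p, q, r}"
  obtains b c where "0 \<le> bary p q r x" "0 \<le> b" "0 \<le> c" "bary p q r x + b + c = 1"
    "x = bary p q r x *\<^sub>R p + b *\<^sub>R q + c *\<^sub>R r"
proof -
  obtain a b c where abc: "0 \<le> a" "0 \<le> b" "0 \<le> c" "a + b + c = 1" "x = a *\<^sub>R p + b *\<^sub>R q + c *\<^sub>R r"
    using x unfolding convex_hull_3 by auto
  moreover have "bary p q r x = a" using bary_convex_3[OF det abc(4)] abc(5) by simp
  ultimately show ?thesis using that by simp
qed

definition other_vertices :: "'a set \<Rightarrow> 'a \<Rightarrow> 'a \<times> 'a" where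
  "other_vertices T p = (SOME (q, r). T = {p, q, r} \<and> p \<noteq> q \<and> p \<noteq> r \<and> q \<noteq> r)"

lemma conforming_other_vertices:
  assumes conf: "conforming_triangulation \<Omega> \<T>" and "T \<in> \<T>" "p \<in> T"
    and "other_vertices T p = (q, r)"
  shows "T = {p, q, r}" "p \<noteq> q" "p \<noteq> r" "q \<noteq> r" "det2 (q - p) (r - p) \<noteq> 0"
proof -
  obtain q' r' where "T = {p, q', r'}" "p \<noteq> q'" "p \<noteq> r'" "q' \<noteq> r'"
    using conforming_triangle_vertices[OF conf assms(2,3)] by metis
  then have "\<exists>qr. (\<lambda>(q, r). T = {p, q, r} \<and> p \<noteq> q \<and> p \<noteq> r \<and> q \<noteq> r) qr"
    by (intro exI[of _ "(q', r')"]) simp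
  from someI_ex[OF this] show qr: "T = {p, q, r}" "p \<noteq> q" "p \<noteq> r" "q \<noteq> r"
    using assms(4) unfolding other_vertices_def by simp_all
  show "det2 (q - p) (r - p) \<noteq> 0"
    using det2_neq_0_if_not_collinear conforming_triangulationD(3)[OF conf assms(2)] qr(1) by simp
qed

text \<open>The triangle picked by \<open>SOME\<close> is irrelevant by conformity, see \<open>hat2D_on_triangle\<close>.\<close>

definition hat2D :: "(real^2) set set \<Rightarrow> real^2 \<Rightarrow> real^2 \<Rightarrow> real" where
  "hat2D \<T> p x =
     (if \<exists>T\<in>\<T>. p \<in> T \<and> x \<in> convex hull T
      then (case other_vertices (SOME T. T \<in> \<T> \<and> p \<in> T \<and> x \<in> convex hull T) p of
              (q, r) \<Rightarrow> bary p q r x)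
      else 0)"

lemma conforming_vertex_bary_sum:
  assumes conf: "conforming_triangulation \<Omega> \<T>" and T: "T \<in> \<T>" "p \<in> T"
    and "S \<subseteq> T" "sum u S = 1" "x = (\<Sum>s\<in>S. u s *\<^sub>R s)"
  shows "(case other_vertices T p of (q, r) \<Rightarrow> bary p q r x) = (if p \<in> S then u p else 0)"
proof -
  obtain q r where qr: "other_vertices T p = (q, r)" by fastforce
  note T' = conforming_other_vertices[OF conf T qr]
  have "bary p q r x = (if p \<in> S then u p else 0)"
    by (rule bary_affine_sum[OF T'(5)])
       (use assms(4-6) T'(1) conforming_triangulationD(4)[OF conf T(1)] finite_subset in auto)
  then show ?thesis using qr by simp
qed

lemma hat2D_on_triangle:
  assumes conf: "conforming_triangulation \<Omega> \<T>" and T: "T \<in> \<T>" "x \<in> convex hull T"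
  shows "hat2D \<T> p x = (if p \<in> T then (case other_vertices T p of (q, r) \<Rightarrow> bary p q r x) else 0)"
proof (cases "\<exists>T\<in>\<T>. p \<in> T \<and> x \<in> convex hull T")
  case True
  define T' where "T' = (SOME T. T \<in> \<T> \<and> p \<in> T \<and> x \<in> convex hull T)"
  have T': "T' \<in> \<T>" "p \<in> T'" "x \<in> convex hull T'"
    using someI_ex[OF True[unfolded Bex_def]] unfolding T'_def by auto
  obtain u where u: "sum u (T \<inter> T') = 1" "x = (\<Sum>s\<in>T \<inter> T'. u s *\<^sub>R s)"
    using conforming_hull_inter[OF conf T(1) T'(1) T(2) T'(3)] by metis
  have "hat2D \<T> p x = (if p \<in> T \<inter> T' then u p else 0)"
    using conforming_vertex_bary_sum[OF conf T'(1,2) _ u] True unfolding hat2D_def T'_def by auto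
  moreover have "(case other_vertices T p of (q, r) \<Rightarrow> bary p q r x) = (if p \<in> T \<inter> T' then u p else 0)"
    if "p \<in> T" using conforming_vertex_bary_sum[OF conf T(1) that _ u] by auto
  ultimately show ?thesis using T'(2) by auto
next
  case False
  then show ?thesis using T unfolding hat2D_def by auto
qed

lemma hat2D_nonneg:
  assumes conf: "conforming_triangulation \<Omega> \<T>" and "x \<in> (\<Union>T\<in>\<T>. convex hull T)"
  shows "0 \<le> hat2D \<T> p x"
proof -
  obtain T where T: "T \<in> \<T>" "x \<in> convex hull T" using assms(2) by auto
  show ?thesis
  proof (cases "p \<in> T")
    case True
    obtain q r where qr: "other_vertices T p = (q, r)" by fastforce
    note T' = conforming_other_vertices[OF conf T(1) True qr]
    show ?thesis
      using convex_hull_3_bary[OF T'(5)] T(2) hat2D_on_triangle[OF conf T] True qr T'(1) by auto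
  qed (use hat2D_on_triangle[OF conf T] in simp)
qed

lemma hat2D_frontier:
  assumes conf: "conforming_triangulation \<Omega> \<T>" and pO: "p \<in> \<Omega>" and x: "x \<in> frontier \<Omega>"
  shows "hat2D \<T> p x = 0"
proof (rule ccontr)
  assume ne: "hat2D \<T> p x \<noteq> 0"
  note \<T> = conforming_triangulationD[OF conf]
  have "closed (\<Union>T\<in>\<T>. convex hull T)"
    using \<T>(1,4) by (intro closed_UN) (auto intro: compact_imp_closed finite_imp_compact_convex_hull)
  then have "closure \<Omega> \<subseteq> (\<Union>T\<in>\<T>. convex hull T)"
    using \<T>(5) interior_subset by (metis closure_minimal)
  then obtain T where T: "T \<in> \<T>" "x \<in> convex hull T" using x by (auto simp: frontier_def)
  have pT: "p \<in> T" using ne hat2D_on_triangle[OF conf T] by (auto split: if_splits)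
  obtain q r where qr: "other_vertices T p = (q, r)" by fastforce
  note T' = conforming_other_vertices[OF conf T(1) pT qr]
  obtain b c where abc: "0 \<le> b" "0 \<le> c" "bary p q r x + b + c = 1"
    "x = bary p q r x *\<^sub>R p + b *\<^sub>R q + c *\<^sub>R r"
    using convex_hull_3_bary[OF T'(5)] T(2) T'(1) by metis
  define a where "a = bary p q r x"
  have a: "0 < a" "a + b + c = 1" "x = a *\<^sub>R p + b *\<^sub>R q + c *\<^sub>R r"
    using ne hat2D_on_triangle[OF conf T] pT qr abc convex_hull_3_bary[OF T'(5)] T(2) T'(1)
    unfolding a_def by (auto simp: less_le)
  have qT: "q \<in> T" "r \<in> T" using T'(1) by auto
  have "x \<in> \<Omega>"
  proof -
    consider "0 < b \<and> 0 < c" | "b = 0 \<and> c = 0" | "0 < b \<and> c = 0" | "b = 0 \<and> 0 < c"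
      using abc by linarith
    then show ?thesis
    proof cases
      case 1
      then have "x \<in> interior (convex hull {p, q, r})"
        using convex_combination_in_interior_triangle[of p q r a b c] \<T>(3)[OF T(1)] T'(1-4) a by simp
      moreover have "interior (convex hull {p, q, r}) \<subseteq> \<Omega>"
        unfolding \<T>(5) using T(1) T'(1) by (intro interior_mono) auto
      ultimately show ?thesis by auto
    next
      case 3
      then have "x = (1 - b) *\<^sub>R p + b *\<^sub>R q" "b < 1" using a by auto
      then show ?thesis using conforming_edge_in_domain[OF conf T(1) pT qT(1) T'(2) pO, of b] 3 by auto
    next
      case 4
      then have "x = (1 - c) *\<^sub>R p + c *\<^sub>R r" "c < 1" using a by auto
      then show ?thesis using conforming_edge_in_domain[OF conf T(1) pT qT(2) T'(3) pO, of c] 4 by auto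
    qed (use a pO in simp)
  qed
  then show False using x \<T>(5) by (simp add: frontier_def)
qed

lemma hat2D_in_P1_2D:
  assumes conf: "conforming_triangulation \<Omega> \<T>" and pO: "p \<in> \<Omega>"
  shows "hat2D \<T> p \<in> P1_2D \<Omega> \<T>"
proof -
  have "\<exists>c d. \<forall>x\<in>convex hull T. hat2D \<T> p x = c \<bullet> x + d" if T: "T \<in> \<T>" for T
  proof (cases "p \<in> T")
    case True
    obtain q r where qr: "other_vertices T p = (q, r)" by fastforce
    show ?thesis
      by (rule exI[of _ "bary_grad p q r"], rule exI[of _ "bary_const p q r"])
         (use hat2D_on_triangle[OF conf T] True qr in \<open>simp add: bary_def\<close>)
  next
    case False
    then show ?thesis using hat2D_on_triangle[OF conf T] by (intro exI[of _ 0]) simp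
  qed
  then show ?thesis unfolding P1_2D_def using hat2D_frontier[OF conf pO] by auto
qed

lemma P1_2D_affine_on_triangle:
  assumes "u \<in> P1_2D \<Omega> \<T>" "T \<in> \<T>"
  obtains c d where "\<forall>x\<in>convex hull T. u x = c \<bullet> x + d"
proof -
  have "\<exists>c d. \<forall>x\<in>convex hull T. u x = c \<bullet> x + d" using assms unfolding P1_2D_def by simp
  then show ?thesis using that by blast
qed

lemma P1_2D_positive_vertex:
  assumes conf: "conforming_triangulation \<Omega> \<T>" and w: "w \<in> P1_2D \<Omega> \<T>"
    and x: "x \<in> \<Omega>" "0 < w x"
  obtains v where "v \<in> \<Union>\<T>" "0 < w v"
proof -
  note \<T> = conforming_triangulationD[OF conf]
  obtain T where T: "T \<in> \<T>" "x \<in> convex hull T" using x(1) \<T>(5) interior_subset by blast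
  obtain c d where cd: "\<forall>y\<in>convex hull T. w y = c \<bullet> y + d"
    using P1_2D_affine_on_triangle[OF w T(1)] .
  obtain u where u: "\<forall>s\<in>T. 0 \<le> u s" "sum u T = 1" "(\<Sum>s\<in>T. u s *\<^sub>R s) = x"
    using T(2) convex_hull_finite[OF \<T>(4)[OF T(1)]] by auto
  have "w x = (\<Sum>s\<in>T. u s * (c \<bullet> s + d))"
    using cd T(2) inner_affine_sum[OF u(2), of c] u(3) by simp
  also have "\<dots> = (\<Sum>s\<in>T. u s * w s)"
  proof (rule sum.cong)
    show "u s * (c \<bullet> s + d) = u s * w s" if "s \<in> T" for s using cd hull_inc[OF that] by simp
  qed simp
  finally have "\<exists>s\<in>T. 0 < w s"
    using x(2) u(1) by (metis (no_types, lifting) mult_nonneg_nonpos not_less sum_nonpos)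
  then show ?thesis using T(1) that by blast
qed

text \<open>Lower bound for the contribution of the triangle \<open>{p, q, r}\<close> to the difference of the two
  inequalities tested with the hat function of \<open>p\<close>, where \<open>c\<close> is the gradient of \<open>u\<^sub>1 - u\<^sub>2\<close>.\<close>

definition hat_gain :: "real \<Rightarrow> real^2 \<Rightarrow> real^2 \<Rightarrow> real^2 \<Rightarrow> real^2 \<Rightarrow> real" where
  "hat_gain B c p q r = c \<bullet> bary_grad p q r - B * (c \<bullet> (p - q) + c \<bullet> (p - r)) / 4"

text \<open>Only \<open>B |T| < 2 min cot\<close> is needed: with \<open>\<Delta> = 2 |T|\<close> the gain is
  \<open>c \<bullet> (p - q) (cot \<theta>\<^sub>r / \<Delta> - B / 4) + c \<bullet> (p - r) (cot \<theta>\<^sub>q / \<Delta> - B / 4)\<close>.\<close>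

lemma hat_gain_pos:
  assumes T: "T = {p, q, r}" "p \<noteq> q" "p \<noteq> r" "q \<noteq> r" "det2 (q - p) (r - p) \<noteq> 0"
    and area: "7 * B * measure lebesgue (convex hull T) < 3 * Min (cot ` tri_angles T)"
    and B: "0 \<le> B" and D: "0 \<le> c \<bullet> (p - q)" "0 \<le> c \<bullet> (p - r)"
  shows "0 \<le> hat_gain B c p q r"
    and "0 < c \<bullet> (p - q) + c \<bullet> (p - r) \<Longrightarrow> 0 < hat_gain B c p q r"
proof -
  define m where "m = Min (cot ` tri_angles T)"
  define \<Delta> where "\<Delta> = \<bar>det2 (q - p) (r - p)\<bar>"
  have \<Delta>: "0 < \<Delta>" using T(5) unfolding \<Delta>_def by simp
  have fa: "finite (cot ` tri_angles T)" using finite_tri_angles[of T] T(1) by simp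
  have "vangle (p - r) (q - r) \<in> tri_angles T" "vangle (p - q) (r - q) \<in> tri_angles T"
    unfolding tri_angles_def using T(1-4) by blast+
  then have m: "m \<le> cot (vangle (p - r) (q - r))" "m \<le> cot (vangle (p - q) (r - q))"
    unfolding m_def using fa by auto
  have "\<Delta> / 4 \<le> measure lebesgue (convex hull T)"
    unfolding T(1) \<Delta>_def by (rule measure_triangle_ge)
  then have "7 * B * (\<Delta> / 4) < 3 * m" using area B unfolding m_def
    by (meson le_less_trans mult_left_mono zero_le_numeral mult_nonneg_nonneg)
  moreover have "0 \<le> B * \<Delta>" using B \<Delta> by simp
  ultimately have "B * \<Delta> < 4 * m" by linarith
  then have \<kappa>: "B / 4 < m / \<Delta>" using \<Delta> by (simp add: field_simps)
  have "hat_gain B c p q r = c \<bullet> (p - q) * (cot (vangle (p - r) (q - r)) / \<Delta> - B / 4)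
      + c \<bullet> (p - r) * (cot (vangle (p - q) (r - q)) / \<Delta> - B / 4)"
    unfolding hat_gain_def bary_grad_inner_cot[OF T(5)] \<Delta>_def[symmetric] using \<Delta>
    by (simp add: field_simps)
  moreover have "c \<bullet> (p - q) * (m / \<Delta> - B / 4) \<le> c \<bullet> (p - q) * (cot (vangle (p - r) (q - r)) / \<Delta> - B / 4)"
    "c \<bullet> (p - r) * (m / \<Delta> - B / 4) \<le> c \<bullet> (p - r) * (cot (vangle (p - q) (r - q)) / \<Delta> - B / 4)"
    using m \<Delta> D by (simp_all add: divide_right_mono mult_left_mono)
  ultimately have "c \<bullet> (p - q) * (m / \<Delta> - B / 4) + c \<bullet> (p - r) * (m / \<Delta> - B / 4) \<le> hat_gain B c p q r"
    by linarith
  moreover have "0 < m / \<Delta> - B / 4" using \<kappa> by simp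
  ultimately show "0 \<le> hat_gain B c p q r" "0 < c \<bullet> (p - q) + c \<bullet> (p - r) \<Longrightarrow> 0 < hat_gain B c p q r"
    using D by (smt (verit) mult_nonneg_nonneg mult_pos_pos distrib_right)+
qed

lemma bary_weighted_diff_ge:
  fixes f :: "real \<Rightarrow> real"
  assumes det: "det2 (q - p) (r - p) \<noteq> 0" and x: "x \<in> convex hull {p, q, r}"
    and w: "\<forall>y\<in>convex hull {p, q, r}. w y = c \<bullet> y + d"
    and max: "w q \<le> w p" "w r \<le> w p" "0 < w p"
    and f: "f C1_differentiable_on UNIV" "\<forall>\<eta>. 0 \<le> deriv f \<eta> \<and> deriv f \<eta> \<le> B"
    and st: "s - t = w x"
  shows "(f s - f t) * bary p q r x \<ge> - B * (c \<bullet> (p - q) + c \<bullet> (p - r)) / 4"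
proof -
  obtain b c' where abc: "0 \<le> bary p q r x" "0 \<le> b" "0 \<le> c'" "bary p q r x + b + c' = 1"
    "x = bary p q r x *\<^sub>R p + b *\<^sub>R q + c' *\<^sub>R r"
    using convex_hull_3_bary[OF det x] by metis
  define a where "a = bary p q r x"
  have wv: "w v = c \<bullet> v + d" if "v \<in> {p, q, r}" for v using w hull_inc[OF that] by blast
  have "w x = c \<bullet> x + d" using w x by blast
  then have "w x = a * w p + b * w q + c' * w r"
    using inner_affine_3[OF abc(4), of c p q r d] abc(5) wv[of p] wv[of q] wv[of r]
    unfolding a_def by simp
  also have "\<dots> = (a + b + c') * w p - b * (w p - w q) - c' * (w p - w r)"
    by (simp add: algebra_simps)
  also have "\<dots> = w p - b * (w p - w q) - c' * (w p - w r)" using abc(4) unfolding a_def by simp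
  also have "\<dots> \<ge> - ((1 - a) * ((w p - w q) + (w p - w r)))"
  proof -
    have "b * (w p - w q) \<le> b * ((w p - w q) + (w p - w r))"
      "c' * (w p - w r) \<le> c' * ((w p - w q) + (w p - w r))"
      using abc max by (intro mult_left_mono; simp)+
    moreover have "1 - a = b + c'" using abc(4) unfolding a_def by simp
    then have "(1 - a) * ((w p - w q) + (w p - w r))
        = b * ((w p - w q) + (w p - w r)) + c' * ((w p - w q) + (w p - w r))"
      by (simp add: distrib_right)
    ultimately show ?thesis using max(3) by linarith
  qed
  finally have "s - t \<ge> - ((1 - a) * (c \<bullet> (p - q) + c \<bullet> (p - r)))"
    using st wv by (simp add: inner_diff_right)
  then show ?thesis
    using C1_deriv_bounded_weighted_diff_ge[OF f, of a "c \<bullet> (p - q) + c \<bullet> (p - r)" s t] abc max wv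
    unfolding a_def by (simp add: inner_diff_right)
qed

lemma P1_2D_diff:
  assumes "u \<in> P1_2D \<Omega> \<T>" "v \<in> P1_2D \<Omega> \<T>"
  shows "(\<lambda>x. u x - v x) \<in> P1_2D \<Omega> \<T>"
proof -
  have "\<exists>c d. \<forall>x\<in>convex hull T. u x - v x = c \<bullet> x + d" if T: "T \<in> \<T>" for T
  proof -
    obtain c d where "\<forall>x\<in>convex hull T. u x = c \<bullet> x + d"
      using P1_2D_affine_on_triangle[OF assms(1) T] .
    moreover obtain c' d' where "\<forall>x\<in>convex hull T. v x = c' \<bullet> x + d'"
      using P1_2D_affine_on_triangle[OF assms(2) T] .
    ultimately show ?thesis by (intro exI[of _ "c - c'"] exI[of _ "d - d'"]) (auto simp: inner_diff_left)
  qed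
  then show ?thesis using assms unfolding P1_2D_def by simp
qed

lemma P1_2D_hat_triangle_estimate:
  fixes f :: "real \<Rightarrow> real"
  assumes conf: "conforming_triangulation \<Omega> \<T>" and T: "T \<in> \<T>" "x \<in> interior (convex hull T)"
    and u: "\<forall>y\<in>convex hull T. u1 y = c1 \<bullet> y + d1" "\<forall>y\<in>convex hull T. u2 y = c2 \<bullet> y + d2"
    and max: "\<forall>v\<in>T. u1 v - u2 v \<le> u1 p - u2 p" "0 < u1 p - u2 p"
    and f: "f C1_differentiable_on UNIV" "\<forall>\<eta>. 0 \<le> deriv f \<eta> \<and> deriv f \<eta> \<le> B"
  shows "(grad u1 x \<bullet> grad (hat2D \<T> p) x + f (u1 x) * hat2D \<T> p x)
      - (grad u2 x \<bullet> grad (hat2D \<T> p) x + f (u2 x) * hat2D \<T> p x)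
    \<ge> (if p \<in> T then (case other_vertices T p of (q, r) \<Rightarrow> hat_gain B (c1 - c2) p q r) else 0)"
proof -
  have xT: "x \<in> convex hull T" using T(2) interior_subset by blast
  have affine_grad: "grad h x = c" if "\<forall>y\<in>convex hull T. h y = c \<bullet> y + d" for h c d
    by (rule grad_eq_affine_on_open[OF open_interior T(2)]) (use that interior_subset in blast)
  have gu: "grad u1 x = c1" "grad u2 x = c2" using affine_grad u by blast+
  show ?thesis
  proof (cases "p \<in> T")
    case True
    obtain q r where qr: "other_vertices T p = (q, r)" by fastforce
    note T' = conforming_other_vertices[OF conf T(1) True qr]
    have \<phi>: "hat2D \<T> p y = bary p q r y" if "y \<in> convex hull T" for y
      using hat2D_on_triangle[OF conf T(1) that] True qr by simp
    have "grad (hat2D \<T> p) x = bary_grad p q r"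
      by (rule affine_grad[of _ _ "bary_const p q r"]) (use \<phi> in \<open>simp add: bary_def\<close>)
    then have "(grad u1 x \<bullet> grad (hat2D \<T> p) x + f (u1 x) * hat2D \<T> p x)
      - (grad u2 x \<bullet> grad (hat2D \<T> p) x + f (u2 x) * hat2D \<T> p x)
      = (c1 - c2) \<bullet> bary_grad p q r + (f (u1 x) - f (u2 x)) * bary p q r x"
      using \<phi>[OF xT] gu by (simp add: algebra_simps inner_diff_left)
    moreover have "(f (u1 x) - f (u2 x)) * bary p q r x \<ge>
        - B * ((c1 - c2) \<bullet> (p - q) + (c1 - c2) \<bullet> (p - r)) / 4"
    proof (rule bary_weighted_diff_ge[OF T'(5) _ _ _ _ _ f])
      show "\<forall>y\<in>convex hull {p, q, r}. u1 y - u2 y = (c1 - c2) \<bullet> y + (d1 - d2)"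
        using u T'(1) by (simp add: inner_diff_left)
    qed (use xT T'(1) max in auto)
    ultimately show ?thesis using True qr unfolding hat_gain_def by simp
  next
    case False
    then have "hat2D \<T> p y = 0 \<bullet> y + 0" if "y \<in> convex hull T" for y
      using hat2D_on_triangle[OF conf T(1) that] by simp
    then have "grad (hat2D \<T> p) x = 0" "hat2D \<T> p x = 0" using affine_grad[of _ 0 0] xT by auto
    then show ?thesis using False by simp
  qed
qed

lemma P1_2D_positive_max_vertex:
  assumes conf: "conforming_triangulation \<Omega> \<T>" and w: "w \<in> P1_2D \<Omega> \<T>"
    and x: "x \<in> \<Omega>" "0 < w x"
  obtains p where "p \<in> \<Union>\<T>" "p \<in> \<Omega>" "\<forall>v\<in>\<Union>\<T>. w v \<le> w p" "0 < w p"
    "\<forall>v\<in>\<Union>\<T>. w v = w p \<longrightarrow> v $ 1 \<le> p $ 1"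
proof -
  note \<T> = conforming_triangulationD[OF conf]
  obtain v0 where v0: "v0 \<in> \<Union>\<T>" "0 < w v0" using P1_2D_positive_vertex[OF conf w x] .
  moreover have "finite (\<Union>\<T>)" using \<T>(1,4) by blast
  ultimately obtain p where p: "p \<in> \<Union>\<T>" "\<forall>v\<in>\<Union>\<T>. w v \<le> w p"
    "\<forall>v\<in>\<Union>\<T>. w v = w p \<longrightarrow> v $ 1 \<le> p $ 1"
    using finite_exists_max_rightmost[of "\<Union>\<T>" w "\<lambda>v. v $ 1"] by blast
  have wp: "0 < w p" using p(2) v0 by fastforce
  then have "p \<notin> frontier \<Omega>" using w unfolding P1_2D_def by auto
  moreover obtain T where "T \<in> \<T>" "p \<in> T" using p(1) by auto
  ultimately have "p \<in> \<Omega>"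
    using conforming_vertex_in_closure[OF conf] \<T>(5) by (simp add: frontier_def)
  then show ?thesis using that p wp by blast
qed

lemma P1_2D_hat_gain_pos:
  assumes conf: "conforming_triangulation \<Omega> \<T>" and T: "T \<in> \<T>" "p \<in> T"
    and area: "7 * B * measure lebesgue (convex hull T) < 3 * Min (cot ` tri_angles T)" and B: "0 \<le> B"
    and w: "\<forall>y\<in>convex hull T. w y = c \<bullet> y + d" and max: "\<forall>v\<in>T. w v \<le> w p"
    and qr: "other_vertices T p = (q, r)"
  shows "0 \<le> hat_gain B c p q r" and "\<exists>v\<in>T. w v < w p \<Longrightarrow> 0 < hat_gain B c p q r"
proof -
  note T' = conforming_other_vertices[OF conf T qr]
  have D: "c \<bullet> (p - v) = w p - w v" if "v \<in> T" for v
    using w hull_inc[OF that] hull_inc[OF T(2)] by (simp add: inner_diff_right)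
  have "q \<in> T" "r \<in> T" using T'(1) by auto
  note gain = hat_gain_pos[OF T' area B, of c]
  show "0 \<le> hat_gain B c p q r" using gain(1) D \<open>q \<in> T\<close> \<open>r \<in> T\<close> max by simp
  show "0 < hat_gain B c p q r" if "\<exists>v\<in>T. w v < w p"
  proof (rule gain(2))
    have "w q < w p \<or> w r < w p" using that T'(1) by auto
    then show "0 < c \<bullet> (p - q) + c \<bullet> (p - r)"
      using D \<open>q \<in> T\<close> \<open>r \<in> T\<close> max by (auto simp: add_pos_nonneg add_nonneg_pos)
  qed (use D \<open>q \<in> T\<close> \<open>r \<in> T\<close> max in simp_all)
qed

lemma P1_2D_hat_estimate:
  fixes f :: "real \<Rightarrow> real"
  assumes conf: "conforming_triangulation \<Omega> \<T>"
    and u: "\<forall>T\<in>\<T>. \<forall>y\<in>convex hull T. u1 y = c1 T \<bullet> y + d1 T"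
       "\<forall>T\<in>\<T>. \<forall>y\<in>convex hull T. u2 y = c2 T \<bullet> y + d2 T"
    and max: "\<forall>v\<in>\<Union>\<T>. u1 v - u2 v \<le> u1 p - u2 p" "0 < u1 p - u2 p"
    and f: "f C1_differentiable_on UNIV" "\<forall>\<eta>. 0 \<le> deriv f \<eta> \<and> deriv f \<eta> \<le> B"
    and x: "x \<in> \<Omega>" "x \<notin> triangulation_skeleton \<T>"
  shows "(\<Sum>T\<in>{T\<in>\<T>. p \<in> T}. indicator (convex hull T) x *
      (case other_vertices T p of (q, r) \<Rightarrow> hat_gain B (c1 T - c2 T) p q r))
    \<le> (grad u1 x \<bullet> grad (hat2D \<T> p) x + f (u1 x) * hat2D \<T> p x)
      - (grad u2 x \<bullet> grad (hat2D \<T> p) x + f (u2 x) * hat2D \<T> p x)"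
proof -
  note \<T> = conforming_triangulationD[OF conf]
  define K where "K T = (case other_vertices T p of (q, r) \<Rightarrow> hat_gain B (c1 T - c2 T) p q r)" for T
  have "x \<in> (\<Union>T\<in>\<T>. convex hull T)" using x(1) \<T>(5) interior_subset by blast
  then obtain T where T: "T \<in> \<T>" "x \<in> convex hull T" by blast
  have uniq: "T' = T" if "T' \<in> \<T>" "x \<in> convex hull T'" for T'
    using triangulation_skeleton_unique[OF that(1) T(1) that(2) T(2) x(2)] .
  have "(\<Sum>T'\<in>{T\<in>\<T>. p \<in> T}. indicator (convex hull T') x * K T')
      = (\<Sum>T'\<in>{T\<in>\<T>. p \<in> T}. if T' = T then K T' else 0)"
  proof (rule sum.cong[OF refl])
    fix T' assume T': "T' \<in> {T\<in>\<T>. p \<in> T}"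
    show "indicator (convex hull T') x * K T' = (if T' = T then K T' else 0)"
    proof (cases "T' = T")
      case False
      then have "x \<notin> convex hull T'" using uniq T' by blast
      then show ?thesis using False by simp
    qed (use T(2) in simp)
  qed
  also have "\<dots> = (if p \<in> T then K T else 0)" using \<T>(1) T(1) by (simp add: sum.delta')
  also have "\<dots> \<le> (grad u1 x \<bullet> grad (hat2D \<T> p) x + f (u1 x) * hat2D \<T> p x)
      - (grad u2 x \<bullet> grad (hat2D \<T> p) x + f (u2 x) * hat2D \<T> p x)"
    using P1_2D_hat_triangle_estimate[OF conf T(1) _ bspec[OF u(1) T(1)] bspec[OF u(2) T(1)] _ max(2) f]
      triangulation_skeleton_interior[OF conf T x(2)] max(1) T(1)
    unfolding K_def by blast
  finally show ?thesis unfolding K_def .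
qed

lemma P1_2D_comparison:
  fixes b :: "real^2 \<Rightarrow> real \<Rightarrow> real"
  assumes conf: "conforming_triangulation \<Omega> \<T>"
    and car: "caratheodory_bounded \<Omega> b B"
    and sub: "discrete_subsol \<Omega> (P1_2D \<Omega> \<T>) (\<lambda>u v x. grad u x \<bullet> grad v x) b u1"
    and sup: "discrete_supersol \<Omega> (P1_2D \<Omega> \<T>) (\<lambda>u v x. grad u x \<bullet> grad v x) b u2"
    and area: "\<forall>T\<in>\<T>. 7 * B * measure lebesgue (convex hull T) < 3 * Min (cot ` tri_angles T)"
  shows "\<forall>x\<in>\<Omega>. u1 x \<le> u2 x"
proof (rule ccontr)
  assume "\<not> ?thesis"
  then obtain x0 where x0: "x0 \<in> \<Omega>" "u2 x0 < u1 x0" by auto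
  note \<T> = conforming_triangulationD[OF conf]
  have B: "0 \<le> B" using car unfolding caratheodory_bounded_def by simp
  have V: "u1 \<in> P1_2D \<Omega> \<T>" "u2 \<in> P1_2D \<Omega> \<T>"
    using sub sup unfolding discrete_subsol_def discrete_supersol_def by auto
  define w where "w x = u1 x - u2 x" for x
  obtain p where p: "p \<in> \<Union>\<T>" "p \<in> \<Omega>" and max: "\<forall>v\<in>\<Union>\<T>. w v \<le> w p" "0 < w p"
    and rightmost: "\<forall>v\<in>\<Union>\<T>. w v = w p \<longrightarrow> v $ 1 \<le> p $ 1"
    using P1_2D_positive_max_vertex[OF conf P1_2D_diff[OF V] x0(1)] x0(2) unfolding w_def by auto
  have "\<forall>T\<in>\<T>. \<exists>c d. \<forall>x\<in>convex hull T. u1 x = c \<bullet> x + d"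
    "\<forall>T\<in>\<T>. \<exists>c d. \<forall>x\<in>convex hull T. u2 x = c \<bullet> x + d"
    using V unfolding P1_2D_def by auto
  then obtain c1 d1 c2 d2 where u:
    "\<forall>T\<in>\<T>. \<forall>x\<in>convex hull T. u1 x = c1 T \<bullet> x + d1 T"
    "\<forall>T\<in>\<T>. \<forall>x\<in>convex hull T. u2 x = c2 T \<bullet> x + d2 T"
    by metis
  have w: "\<forall>x\<in>convex hull T. w x = (c1 T - c2 T) \<bullet> x + (d1 T - d2 T)" if "T \<in> \<T>" for T
    using u that unfolding w_def by (simp add: inner_diff_left)
  define St where "St = {T\<in>\<T>. p \<in> T}"
  define K where "K T = (case other_vertices T p of (q, r) \<Rightarrow> hat_gain B (c1 T - c2 T) p q r)" for T
  have gain: "0 \<le> K T" "(\<exists>v\<in>T. w v < w p) \<Longrightarrow> 0 < K T" if "T \<in> St" for T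
    using P1_2D_hat_gain_pos[OF conf _ _ _ B w, of T p] area max(1) that
    unfolding K_def St_def by (auto split: prod.split)
  obtain Ts v where Ts: "Ts \<in> \<T>" "p \<in> Ts" "v \<in> Ts" "p $ 1 < v $ 1"
    using p(1) conforming_interior_vertex_right_neighbour[OF conf _ _ p(2)] by blast
  then have "w v < w p" using max(1) rightmost by fastforce
  then have "Ts \<in> St" "0 < K Ts" using gain(2)[of Ts] Ts unfolding St_def by auto
  then have "0 < K Ts * measure lebesgue (convex hull Ts)" "Ts \<in> St"
    using conforming_triangle_measure_pos[OF conf Ts(1)] by simp_all
  moreover have fin: "finite St" using \<T>(1) unfolding St_def by simp
  ultimately have "0 < (\<Sum>T\<in>St. K T * measure lebesgue (convex hull T))"
    using gain(1) by (intro sum_pos2[of _ Ts]) auto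
  moreover have "(\<Sum>T\<in>St. K T * measure lebesgue (convex hull T)) \<le> 0"
  proof (rule subsol_supersol_gain_le_0[OF sub sup hat2D_in_P1_2D[OF conf p(2)] _ fin])
    show "\<forall>x\<in>\<Omega>. 0 \<le> hat2D \<T> p x" using hat2D_nonneg[OF conf] \<T>(5) interior_subset by blast
    show "\<forall>T\<in>St. convex hull T \<in> lmeasurable"
      using \<T>(4) unfolding St_def by (auto intro: lmeasurable_compact finite_imp_compact_convex_hull)
    have skel: "AE x in lebesgue. x \<notin> triangulation_skeleton \<T>"
      by (rule AE_not_in) (use negligible_triangulation_skeleton[OF conf] in \<open>simp add: negligible_iff_null_sets\<close>)
    then show "AE x in lebesgue. x \<notin> \<Omega> \<longrightarrow> (\<Sum>T\<in>St. indicator (convex hull T) x * K T) \<le> 0"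
    proof eventually_elim
      case (elim x)
      have "interior (convex hull T) \<subseteq> \<Omega>" if "T \<in> \<T>" for T
        unfolding \<T>(5) using that by (intro interior_mono) auto
      then have "x \<notin> convex hull T" if "T \<in> St" "x \<notin> \<Omega>" for T
        using triangulation_skeleton_interior[OF conf _ _ elim] that unfolding St_def by blast
      then show ?case by (simp add: indicator_def)
    qed
    have "AE x in lebesgue. x \<in> \<Omega> \<longrightarrow> b x C1_differentiable_on UNIV \<and>
        (\<forall>\<eta>. 0 \<le> deriv (b x) \<eta> \<and> deriv (b x) \<eta> \<le> B)"
      using car unfolding caratheodory_bounded_def by simp
    then show "AE x in lebesgue. x \<in> \<Omega> \<longrightarrow> (\<Sum>T\<in>St. indicator (convex hull T) x * K T)
        \<le> (grad u1 x \<bullet> grad (hat2D \<T> p) x + b x (u1 x) * hat2D \<T> p x)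
          - (grad u2 x \<bullet> grad (hat2D \<T> p) x + b x (u2 x) * hat2D \<T> p x)"
      using skel
    proof eventually_elim
      case (elim x)
      then show ?case
        using P1_2D_hat_estimate[OF conf u max[unfolded w_def], of "b x" B x]
        unfolding K_def St_def by blast
    qed
  qed
  ultimately show False by linarith
qed

theorem theorem5p1:
  shows "(\<forall>(b :: real \<Rightarrow> real \<Rightarrow> real) B \<alpha> \<beta> n a u1 u2.
            mesh1D \<alpha> \<beta> n a \<and>
            caratheodory_bounded {\<alpha><..<\<beta>} b B \<and>
            discrete_subsol {\<alpha><..<\<beta>} (P1_1D n a) (\<lambda>u v x. deriv u x * deriv v x) b u1 \<and>
            discrete_supersol {\<alpha><..<\<beta>} (P1_1D n a) (\<lambda>u v x. deriv u x * deriv v x) b u2 \<and>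
            (\<forall>k\<in>{1..n}. B * (a k - a (k - 1))^2 < 2)
          \<longrightarrow> (\<forall>x\<in>{\<alpha><..<\<beta>}. u1 x \<le> u2 x))
       \<and> (\<forall>(b :: real^2 \<Rightarrow> real \<Rightarrow> real) B \<Omega> \<T> u1 u2.
            conforming_triangulation \<Omega> \<T> \<and>
            (\<exists>tmin tmax. 0 < tmin \<and> tmin \<le> tmax \<and> tmax < pi / 2 \<and>
               (\<forall>T\<in>\<T>. \<forall>\<theta>\<in>tri_angles T. tmin \<le> \<theta> \<and> \<theta> \<le> tmax)) \<and>
            caratheodory_bounded \<Omega> b B \<and>
            discrete_subsol \<Omega> (P1_2D \<Omega> \<T>) (\<lambda>u v x. grad u x \<bullet> grad v x) b u1 \<and>
            discrete_supersol \<Omega> (P1_2D \<Omega> \<T>) (\<lambda>u v x. grad u x \<bullet> grad v x) b u2 \<and>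
            (\<forall>T\<in>\<T>. 7 * B * measure lebesgue (convex hull T) < 3 * Min (cot ` tri_angles T))
          \<longrightarrow> (\<forall>x\<in>\<Omega>. u1 x \<le> u2 x))"
  using P1_1D_comparison P1_2D_comparison by blast

end
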